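(* Let $N=r+1$, $M_n:=M_{1,n}=\sum_{i=1}^Nx_i^{\,n}\prod_{j\neq i}\frac{x_i}{x_i-x_j}\Gamma_i$ with $(\Gamma_if)(x)=f(\dots,qx_i,\dots)$, and $m(u)=\sum_{n\in\mathbb{Z}}u^nM_n$. For $\alpha\ge1$ and integers $a_1,\dots,a_\alpha$, let $M_{a_1,\dots,a_\alpha}$ be the coefficient of $u_1^{a_1}\cdots u_\alpha^{a_\alpha}$ in $\prod_{1\le i<j\le\alpha}(1-qu_j/u_i)\,m(u_1)\cdots m(u_\alpha)$. Then $$M_{a_1,\dots,a_\alpha}=\sum_{A\in ASM_\alpha}(-q)^{I(A)-N(A)}(1-q)^{N(A)}\prod_{i=1}^{\alpha}M_{a_i+\alpha-i-m_i(A)},$$ where the product is ordered with $i$ increasing from left to right.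
   Context: $ASM_\alpha$ is the set of $\alpha\times\alpha$ alternating sign matrices: matrices with entries in $\{-1,0,1\}$ whose nonzero entries alternate in sign along each row and column and whose row and column sums all equal $1$. For $A\in ASM_\alpha$: $I(A)=\sum_{i>k,\ j<\ell}A_{i,j}A_{k,\ell}$ is its inversion number, $N(A)$ is the number of entries equal to $-1$, and $m_i(A)=(Av)_i$ where $v=(\alpha-1,\alpha-2,\dots,1,0)^t$. The right-hand side is the quantum determinant of the matrix $(M_{a_j+i-j})_{1\le i,j\le\alpha}$. *)

theory Defs
  imports Main
begin

type_synonym 'a fn = "(nat \<Rightarrow> 'a) \<Rightarrow> 'a"

definition Mop :: "'a::field \<Rightarrow> nat \<Rightarrow> int \<Rightarrow> 'a fn \<Rightarrow> 'a fn" where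
  "Mop q N n f x = (\<Sum>i\<in>{1..N}. x i powi n * (\<Prod>j\<in>{1..N} - {i}. x i / (x i - x j))
                       * f (x(i := q * x i)))"

definition opprod :: "('b \<Rightarrow> 'b) list \<Rightarrow> 'b \<Rightarrow> 'b" where
  "opprod ops = foldr (\<circ>) ops id"

definition pairs :: "nat \<Rightarrow> (nat \<times> nat) set" where
  "pairs \<alpha> = {(i,j). 1 \<le> i \<and> i < j \<and> j \<le> \<alpha>}"

text \<open>Exponent of u_k in the monomial prod_{(i,j) in S} u_j/u_i.\<close>
definition shift_exp :: "(nat \<times> nat) set \<Rightarrow> nat \<Rightarrow> int" where
  "shift_exp S k = int (card {i. (i,k) \<in> S}) - int (card {j. (k,j) \<in> S})"

text \<open>Coefficient of u_1^{a_1}...u_alpha^{a_alpha} in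
  prod_{i<j} (1 - q u_j/u_i) m(u_1)...m(u_alpha), m(u) = sum_n u^n M_n,
  obtained by expanding the product over subsets S of pairs (applied to f at x).\<close>
definition Mcoef :: "'a::field \<Rightarrow> nat \<Rightarrow> nat \<Rightarrow> (nat \<Rightarrow> int) \<Rightarrow> 'a fn \<Rightarrow> 'a fn" where
  "Mcoef q N \<alpha> a f x = (\<Sum>S\<in>Pow (pairs \<alpha>). (- q) ^ card S *
      opprod (map (\<lambda>k. Mop q N (a k - shift_exp S k)) [1..<\<alpha>+1]) f x)"

definition ASM :: "nat \<Rightarrow> (nat \<Rightarrow> nat \<Rightarrow> int) set" where
  "ASM \<alpha> = {A.
     (\<forall>i j. (i \<notin> {1..\<alpha>} \<or> j \<notin> {1..\<alpha>}) \<longrightarrow> A i j = 0) \<and>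
     (\<forall>i\<in>{1..\<alpha>}. \<forall>j\<in>{1..\<alpha>}. A i j \<in> {-1, 0, 1}) \<and>
     (\<forall>i\<in>{1..\<alpha>}. (\<Sum>j\<in>{1..\<alpha>}. A i j) = 1) \<and>
     (\<forall>j\<in>{1..\<alpha>}. (\<Sum>i\<in>{1..\<alpha>}. A i j) = 1) \<and>
     (\<forall>i j1 j2. A i j1 \<noteq> 0 \<and> A i j2 \<noteq> 0 \<and> j1 < j2 \<and> (\<forall>j. j1 < j \<and> j < j2 \<longrightarrow> A i j = 0)
          \<longrightarrow> A i j1 = - A i j2) \<and>
     (\<forall>j i1 i2. A i1 j \<noteq> 0 \<and> A i2 j \<noteq> 0 \<and> i1 < i2 \<and> (\<forall>i. i1 < i \<and> i < i2 \<longrightarrow> A i j = 0)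
          \<longrightarrow> A i1 j = - A i2 j)}"

definition inv_num :: "nat \<Rightarrow> (nat \<Rightarrow> nat \<Rightarrow> int) \<Rightarrow> int" where
  "inv_num \<alpha> A = (\<Sum>i\<in>{1..\<alpha>}. \<Sum>j\<in>{1..\<alpha>}. \<Sum>k\<in>{1..\<alpha>}. \<Sum>l\<in>{1..\<alpha>}.
      if k < i \<and> j < l then A i j * A k l else 0)"

definition neg_num :: "nat \<Rightarrow> (nat \<Rightarrow> nat \<Rightarrow> int) \<Rightarrow> nat" where
  "neg_num \<alpha> A = card {(i,j). i \<in> {1..\<alpha>} \<and> j \<in> {1..\<alpha>} \<and> A i j = -1}"

definition mvec :: "nat \<Rightarrow> (nat \<Rightarrow> nat \<Rightarrow> int) \<Rightarrow> nat \<Rightarrow> int" where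
  "mvec \<alpha> A i = (\<Sum>j\<in>{1..\<alpha>}. A i j * (int \<alpha> - int j))"

end

theory Submission
  imports Defs "Jordan_Normal_Form.Determinant" "HOL-Computational_Algebra.Polynomial"
begin

text \<open>Expanding \<open>\<Prod>\<^sub>i\<^sub><\<^sub>j (1 - q u\<^sub>j / u\<^sub>i)\<close>, both sides are linear combinations of ordered products
  \<open>M\<^bsub>e\<^sub>1\<^esub> \<cdots> M\<^bsub>e\<^sub>\<alpha>\<^esub>\<close>. Applied to \<open>f\<close>, such a product is a sum over the sequences of coordinates moved, in
  which the exponents enter only through the Laurent monomial \<open>\<Prod>\<^sub>k y\<^sub>k ^ e\<^sub>k\<close> in the moved
  coordinates; so it suffices to prove the corresponding identity of Laurent polynomials. After
  cancelling the common factor \<open>\<Prod>\<^sub>k y\<^sub>k ^ a\<^sub>k\<^sub>+\<^sub>1\<close>, this is the refined enumeration of alternating sign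
  matrices \<open>\<Prod>\<^sub>k\<^sub><\<^sub>l (y\<^sub>l - q y\<^sub>k) = \<Sum>\<^sub>A (-q) ^ (I(A) - N(A)) (1 - q) ^ N(A) \<Prod>\<^sub>k y\<^sub>k ^ (\<alpha> - 1 - m\<^sub>k\<^sub>+\<^sub>1(A))\<close>.

  We prove it through monotone triangles, which are in bijection with alternating sign matrices via
  partial column sums. The sum over the rows \<open>t\<close> interlacing a strictly increasing row \<open>e\<close>, weighted
  by \<open>1\<close>, \<open>-q\<close> or \<open>1 - q\<close> per entry and multiplied by the alternant \<open>det (z\<^sub>i ^ t\<^sub>j)\<close>, equals
  \<open>\<Prod>\<^sub>k (z\<^sub>n - q z\<^sub>k) / \<Prod>\<^sub>k (z\<^sub>n - z\<^sub>k)\<close> times the alternant of \<open>e\<close>, by multilinearity of the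
  determinant and a telescoping identity in each column. Iterating from the staircase
  \<open>(0, 1, \<dots>, \<alpha> - 1)\<close> and cancelling the Vandermonde determinant, which is nonzero at generic
  polynomial points, gives the identity.\<close>

section \<open>Interlacing sequences\<close>

lemma strict_mono_on_lessThan_iff:
  fixes s :: "nat \<Rightarrow> 'a::order"
  shows "strict_mono_on {..<n} s \<longleftrightarrow> (\<forall>j. Suc j < n \<longrightarrow> s j < s (Suc j))"
proof
  assume "strict_mono_on {..<n} s"
  then show "\<forall>j. Suc j < n \<longrightarrow> s j < s (Suc j)" by (auto simp: strict_mono_on_def)
next
  assume step: "\<forall>j. Suc j < n \<longrightarrow> s j < s (Suc j)"
  show "strict_mono_on {..<n} s"
  proof (rule strict_mono_onI)
    fix i j :: nat assume "i \<in> {..<n}" "j \<in> {..<n}" "i < j"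
    then show "s i < s j"
    proof (induction j)
      case (Suc j)
      then have "s j < s (Suc j)" using step by simp
      then show ?case using Suc by (cases "i = j") (auto intro: order.strict_trans)
    qed simp
  qed
qed

definition sorted_nth :: "nat set \<Rightarrow> nat \<Rightarrow> nat" where
  "sorted_nth S j = sorted_list_of_set S ! j"

lemma strict_mono_on_sorted_nth: "finite S \<Longrightarrow> strict_mono_on {..<card S} (sorted_nth S)"
  using strict_sorted_list_of_set[of S]
  by (auto simp: strict_mono_on_def sorted_nth_def sorted_wrt_iff_nth_less)

lemma sorted_nth_image: "finite S \<Longrightarrow> sorted_nth S ` {..<card S} = S"
proof -
  assume "finite S"
  then have "set (sorted_list_of_set S) = S" "length (sorted_list_of_set S) = card S" by auto
  then show ?thesis unfolding sorted_nth_def by (auto simp: set_conv_nth image_def)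
qed

lemma sorted_nth_image_eq:
  assumes "strict_mono_on {..<n} f" "j < n"
  shows "sorted_nth (f ` {..<n}) j = f j"
proof -
  define xs where "xs = map f [0..<n]"
  have "sorted_wrt (<) xs"
    using assms(1) by (auto simp: xs_def sorted_wrt_iff_nth_less strict_mono_on_def)
  moreover have "set xs = f ` {..<n}" unfolding xs_def by auto
  ultimately have "sorted_list_of_set (f ` {..<n}) = xs"
    using sorted_list_of_set.idem_if_sorted_distinct[of xs] by (simp add: strict_sorted_iff)
  then show ?thesis using assms(2) by (simp add: sorted_nth_def xs_def)
qed

definition interlaces :: "nat \<Rightarrow> (nat \<Rightarrow> nat) \<Rightarrow> (nat \<Rightarrow> nat) \<Rightarrow> bool" where
  "interlaces r s t \<longleftrightarrow> (\<forall>j<r. s j \<le> t j \<and> t j \<le> s (Suc j))"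


lemma interlaces_count_bounds:
  assumes "interlaces r s t"
  shows "card {b. b < r \<and> t b < p} \<le> card {a. a < Suc r \<and> s a < p}"
    and "card {a. a < Suc r \<and> s a < p} \<le> Suc (card {b. b < r \<and> t b < p})"
proof -
  show "card {b. b < r \<and> t b < p} \<le> card {a. a < Suc r \<and> s a < p}"
    by (rule card_mono) (use assms in \<open>auto simp: interlaces_def intro: le_less_trans\<close>)
  have "{a. a < Suc r \<and> s a < p} \<subseteq> insert 0 (Suc ` {b. b < r \<and> t b < p})"
  proof
    fix a assume a: "a \<in> {a. a < Suc r \<and> s a < p}"
    show "a \<in> insert 0 (Suc ` {b. b < r \<and> t b < p})"
    proof (cases a)
      case (Suc b)
      then have "t b \<le> s a" using assms a by (auto simp: interlaces_def)
      then show ?thesis using a Suc by auto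
    qed simp
  qed
  then have "card {a. a < Suc r \<and> s a < p} \<le> card (insert 0 (Suc ` {b. b < r \<and> t b < p}))"
    by (rule card_mono[rotated]) auto
  also have "\<dots> \<le> Suc (card (Suc ` {b. b < r \<and> t b < p}))" by (rule card_insert_le_m1) auto
  also have "\<dots> \<le> Suc (card {b. b < r \<and> t b < p})" by (simp add: card_image_le)
  finally show "card {a. a < Suc r \<and> s a < p} \<le> Suc (card {b. b < r \<and> t b < p})" .
qed

text \<open>Conversely, the counting bounds characterise interlacing: if \<open>t j < s j\<close>, the threshold
  \<open>t j + 1\<close> violates the first bound, and if \<open>s (j + 1) < t j\<close>, the threshold \<open>s (j + 1) + 1\<close>
  violates the second.\<close>

lemma interlaces_if_count_bounds:
  assumes s: "strict_mono_on {..<Suc r} s" and t: "strict_mono_on {..<r} t"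
    and c1: "\<And>p. card {b. b < r \<and> t b < p} \<le> card {a. a < Suc r \<and> s a < p}"
    and c2: "\<And>p. card {a. a < Suc r \<and> s a < p} \<le> Suc (card {b. b < r \<and> t b < p})"
  shows "interlaces r s t"
  unfolding interlaces_def
proof (intro allI impI conjI)
  fix j assume j: "j < r"
  show "s j \<le> t j"
  proof (rule ccontr)
    assume "\<not> s j \<le> t j"
    let ?p = "Suc (t j)"
    have "{..j} \<subseteq> {b. b < r \<and> t b < ?p}"
      using j by (auto simp: less_Suc_eq_le intro: strict_mono_on_leD[OF t])
    then have "Suc j \<le> card {b. b < r \<and> t b < ?p}"
      using card_mono[of "{b. b < r \<and> t b < ?p}" "{..j}"] by auto
    moreover have "{a. a < Suc r \<and> s a < ?p} \<subseteq> {..<j}"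
      using \<open>\<not> s j \<le> t j\<close> j strict_mono_on_leD[OF s, of j] by (force simp: not_less)
    then have "card {a. a < Suc r \<and> s a < ?p} \<le> j"
      using card_mono[of "{..<j}"] by fastforce
    ultimately show False using c1[of ?p] by auto
  qed
  show "t j \<le> s (Suc j)"
  proof (rule ccontr)
    assume "\<not> t j \<le> s (Suc j)"
    let ?p = "Suc (s (Suc j))"
    have "{..Suc j} \<subseteq> {a. a < Suc r \<and> s a < ?p}"
      using j by (auto simp: less_Suc_eq_le intro: strict_mono_on_leD[OF s])
    then have "Suc (Suc j) \<le> card {a. a < Suc r \<and> s a < ?p}"
      using card_mono[of "{a. a < Suc r \<and> s a < ?p}" "{..Suc j}"] by auto
    moreover have "{b. b < r \<and> t b < ?p} \<subseteq> {..<j}"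
      using \<open>\<not> t j \<le> s (Suc j)\<close> j strict_mono_on_leD[OF t, of j] by (force simp: not_less)
    then have "card {b. b < r \<and> t b < ?p} \<le> j"
      using card_mono[of "{..<j}"] by fastforce
    ultimately show False using c2[of ?p] by auto
  qed
qed

lemma interlaces_sum_card_less:
  assumes s: "strict_mono_on {..<Suc r} s" and t: "strict_mono_on {..<r} t"
    and it: "interlaces r s t"
  shows "(\<Sum>a<Suc r. card {b. b < r \<and> s a < t b})
    = (\<Sum>a<r. card {b. b < r \<and> t a < t b}) + card {a. a < r \<and> s a < t a}"
proof -
  have lower: "{b. b < r \<and> s a < t b} = {b. a < b \<and> b < r} \<union> (if s a < t a then {a} else {})"
    if a: "a < r" for a
  proof (intro Set.set_eqI iffI)
    fix b assume b: "b \<in> {b. b < r \<and> s a < t b}"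
    show "b \<in> {b. a < b \<and> b < r} \<union> (if s a < t a then {a} else {})"
    proof (cases b a rule: linorder_cases)
      case less
      then have "t b \<le> s (Suc b)" using it b by (auto simp: interlaces_def)
      moreover have "s (Suc b) \<le> s a" using less a by (intro strict_mono_on_leD[OF s]) auto
      ultimately show ?thesis using b by auto
    qed (use b in auto)
  next
    fix b assume b: "b \<in> {b. a < b \<and> b < r} \<union> (if s a < t a then {a} else {})"
    show "b \<in> {b. b < r \<and> s a < t b}"
    proof (cases "b = a")
      case False
      then have ab: "a < b" "b < r" using b by (auto split: if_splits)
      then have "s a < s b" by (intro strict_mono_onD[OF s]) auto
      moreover have "s b \<le> t b" using it ab by (auto simp: interlaces_def)
      ultimately show ?thesis using ab by auto
    qed (use b a in \<open>auto split: if_splits\<close>)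
  qed
  have upper: "{b. b < r \<and> t a < t b} = {b. a < b \<and> b < r}" if "a < r" for a
    using strict_mono_on_less[OF t] that by auto
  have top: "{b. b < r \<and> s r < t b} = {}"
  proof -
    have "t b \<le> s r" if "b < r" for b
    proof -
      have "t b \<le> s (Suc b)" using it that by (auto simp: interlaces_def)
      also have "s (Suc b) \<le> s r" using that by (intro strict_mono_on_leD[OF s]) auto
      finally show ?thesis .
    qed
    then show ?thesis using not_less by blast
  qed
  have "(\<Sum>a<Suc r. card {b. b < r \<and> s a < t b})
      = (\<Sum>a<r. card {b. b < r \<and> t a < t b} + of_bool (s a < t a))"
  proof -
    have "card {b. b < r \<and> s a < t b} = card {b. b < r \<and> t a < t b} + of_bool (s a < t a)"
      if "a < r" for a
      using that by (simp add: lower upper card_Un_disjoint)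
    then show ?thesis by (simp add: top)
  qed
  then show ?thesis by (simp add: sum.distrib Int_def)
qed

lemma interlaces_image_diff:
  assumes s: "strict_mono_on {..<Suc r} s" and it: "interlaces r s t"
  shows "t ` {..<r} - s ` {..<Suc r} = t ` {a. a < r \<and> s a < t a \<and> t a < s (Suc a)}"
proof -
  have mem: "t a \<in> s ` {..<Suc r} \<longleftrightarrow> t a = s a \<or> t a = s (Suc a)" if a: "a < r" for a
  proof
    assume "t a \<in> s ` {..<Suc r}"
    then obtain c where c: "c < Suc r" "t a = s c" by auto
    have "s a \<le> s c" "s c \<le> s (Suc a)" using it a c by (auto simp: interlaces_def)
    then have "a \<le> c" "c \<le> Suc a"
      using strict_mono_on_less_eq[OF s, of a c] strict_mono_on_less_eq[OF s, of c "Suc a"] a c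
      by auto
    then have "c = a \<or> c = Suc a" by auto
    then show "t a = s a \<or> t a = s (Suc a)" using c by auto
  qed (use a in auto)
  show ?thesis
  proof (intro Set.set_eqI iffI)
    fix x assume "x \<in> t ` {..<r} - s ` {..<Suc r}"
    then obtain a where a: "a < r" "x = t a" "t a \<notin> s ` {..<Suc r}" by auto
    then show "x \<in> t ` {a. a < r \<and> s a < t a \<and> t a < s (Suc a)}"
      using it mem[OF a(1)] by (force simp: interlaces_def order.order_iff_strict)
  next
    fix x assume "x \<in> t ` {a. a < r \<and> s a < t a \<and> t a < s (Suc a)}"
    then obtain a where "a < r" "x = t a" "s a < t a" "t a < s (Suc a)" by auto
    then show "x \<in> t ` {..<r} - s ` {..<Suc r}" using mem[of a] by auto
  qed
qed

lemma card_interlacing_less_split: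
  assumes s: "strict_mono_on {..<Suc r} s" and it: "interlaces r s t"
  shows "card {a. a < r \<and> s a < t a}
    = card {a. a < r \<and> t a = s (Suc a)} + card {a. a < r \<and> s a < t a \<and> t a < s (Suc a)}"
proof -
  have "s a < t a \<longleftrightarrow> t a = s (Suc a) \<or> s a < t a \<and> t a < s (Suc a)" if "a < r" for a
    using strict_mono_onD[OF s, of a "Suc a"] it that by (auto simp: interlaces_def)
  then have "{a. a < r \<and> s a < t a}
      = {a. a < r \<and> t a = s (Suc a)} \<union> {a. a < r \<and> s a < t a \<and> t a < s (Suc a)}"
    by auto
  then show ?thesis by (simp add: card_Un_disjoint disjoint_iff)
qed

section \<open>Alternating sign sequences\<close>

lemma alternating_partial_sums_01:
  fixes v :: "nat \<Rightarrow> int"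
  assumes alt: "\<forall>j1 j2. v j1 \<noteq> 0 \<and> v j2 \<noteq> 0 \<and> j1 < j2 \<and> (\<forall>j. j1 < j \<and> j < j2 \<longrightarrow> v j = 0)
      \<longrightarrow> v j1 = - v j2"
    and total: "(\<Sum>j\<le>n. v j) = 1"
  shows "(\<Sum>j\<le>p. v j) \<in> {0,1}"
proof -
  define next_is where
    "next_is p w \<longleftrightarrow> (\<forall>p'. p \<le> p' \<and> v p' \<noteq> 0 \<and> (\<forall>j. p \<le> j \<and> j < p' \<longrightarrow> v j = 0) \<longrightarrow> v p' = w)"
    for p w
  define c where "c = v (LEAST j. v j \<noteq> 0)"
  text \<open>The partial sums alternate between \<open>0\<close> and the first nonzero entry \<open>c\<close>.\<close>
  have inv: "((\<Sum>j<p. v j) = 0 \<and> next_is p c) \<or> ((\<Sum>j<p. v j) = c \<and> next_is p (- c))" for p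
  proof (induction p)
    case 0
    have "(LEAST j. v j \<noteq> 0) = p'" if "v p' \<noteq> 0" "\<forall>j<p'. v j = 0" for p'
      by (rule Least_equality) (use that in \<open>auto simp: not_less[symmetric]\<close>)
    then show ?case by (auto simp: next_is_def c_def)
  next
    case (Suc p)
    show ?case
    proof (cases "v p = 0")
      case True
      have "next_is (Suc p) w" if "next_is p w" for w
        unfolding next_is_def
      proof (intro allI impI)
        fix p' assume p': "Suc p \<le> p' \<and> v p' \<noteq> 0 \<and> (\<forall>j. Suc p \<le> j \<and> j < p' \<longrightarrow> v j = 0)"
        then have "\<forall>j. p \<le> j \<and> j < p' \<longrightarrow> v j = 0"
          using True by (metis Suc_leI le_neq_implies_less)
        then show "v p' = w" using that p' by (auto simp: next_is_def)
      qed
      then show ?thesis using Suc.IH True by auto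
    next
      case False
      have vp: "v p = w" if "next_is p w" for w
        using that False unfolding next_is_def by auto
      have "next_is (Suc p) (- v p)"
        unfolding next_is_def
      proof (intro allI impI)
        fix p' assume "Suc p \<le> p' \<and> v p' \<noteq> 0 \<and> (\<forall>j. Suc p \<le> j \<and> j < p' \<longrightarrow> v j = 0)"
        then have "v p = - v p'" using alt False by (auto simp: Suc_le_eq)
        then show "v p' = - v p" by simp
      qed
      then show ?thesis using Suc.IH vp by auto
    qed
  qed
  have "(\<Sum>j<Suc n. v j) = 1" using total by (simp add: lessThan_Suc_atMost)
  then have "c = 1" using inv[of "Suc n"] by auto
  then show ?thesis using inv[of "Suc p"] by (auto simp: lessThan_Suc_atMost)
qed

lemma alternating_if_partial_sums_01:
  fixes v :: "nat \<Rightarrow> int"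
  assumes vals: "\<forall>j. v j \<in> {-1,0,1}" and pre: "\<forall>p. (\<Sum>j\<le>p. v j) \<in> {0,1}"
    and nz: "v j1 \<noteq> 0" "v j2 \<noteq> 0" and lt: "j1 < j2"
    and zs: "\<forall>j. j1 < j \<and> j < j2 \<longrightarrow> v j = 0"
  shows "v j1 = - v j2"
proof -
  have stay: "(\<Sum>j\<le>k. v j) = (\<Sum>j\<le>j1. v j)" if "j1 \<le> k" "k < j2" for k
    using that by (induction k rule: dec_induct) (use zs in auto)
  obtain k where k: "j2 = Suc k" using lt by (cases j2) auto
  have P2: "(\<Sum>j\<le>j2. v j) = (\<Sum>j\<le>j1. v j) + v j2"
    using stay[of k] k lt by simp
  have P1: "(\<Sum>j\<le>j1. v j) = (\<Sum>j<j1. v j) + v j1"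
    by (simp add: lessThan_Suc_atMost[symmetric])
  have P0: "(\<Sum>j<j1. v j) \<in> {0,1}"
    using pre by (cases j1) (auto simp: lessThan_Suc_atMost)
  have "v j1 \<in> {-1,1}" "v j2 \<in> {-1,1}" using vals nz by auto
  then show ?thesis using P0 P1 P2 pre[rule_format, of j1] pre[rule_format, of j2] by auto
qed

section \<open>Alternants and the interlacing identity\<close>

definition alternant :: "nat \<Rightarrow> (nat \<Rightarrow> nat) \<Rightarrow> (nat \<Rightarrow> 'a::comm_ring_1) \<Rightarrow> 'a" where
  "alternant n e z = det (mat n n (\<lambda>(i,j). z i ^ e j))"

text \<open>Subtracting \<open>z n ^ (e j - e (j - 1))\<close> times column \<open>j - 1\<close> from column \<open>j\<close> is multiplication
  by a unitriangular matrix.\<close>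

lemma alternant_eq_det_column_reduced:
  fixes z :: "nat \<Rightarrow> 'a::comm_ring_1"
  shows "alternant (Suc n) e z = det (mat (Suc n) (Suc n) (\<lambda>(i,j).
     z i ^ e j - (if j = 0 then 0 else z n ^ (e j - e (j - 1)) * z i ^ e (j - 1))))"
    (is "_ = det ?B")
proof -
  define A where "A = (mat (Suc n) (Suc n) (\<lambda>(i,j). z i ^ e j) :: 'a mat)"
  define U where "U = (mat (Suc n) (Suc n) (\<lambda>(k,j). (if k = j then 1 else 0)
        - (if Suc k = j then z n ^ (e j - e k) else 0)) :: 'a mat)"
  have A: "A \<in> carrier_mat (Suc n) (Suc n)" and U: "U \<in> carrier_mat (Suc n) (Suc n)"
    by (auto simp: A_def U_def)
  have "det U = 1"
    by (subst det_upper_triangular[OF _ U]) (auto simp: upper_triangular_def prod_list_diag_prod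
        U_def)
  moreover have "A * U = ?B"
  proof (rule eq_matI)
    fix i j assume ij: "i < dim_row ?B" "j < dim_col ?B"
    have "(A * U) $$ (i,j) = (\<Sum>k\<in>{0..<Suc n}. (if k = j then z i ^ e k else 0))
        - (\<Sum>k\<in>{0..<Suc n}. (if Suc k = j then z i ^ e k * z n ^ (e j - e k) else 0))"
      using ij A U unfolding sum_subtractf[symmetric]
      by (auto simp: scalar_prod_def A_def U_def algebra_simps intro!: sum.cong)
    also have "\<dots> = ?B $$ (i,j)"
      using ij by (cases j) (auto simp: sum.delta mult.commute cong: if_cong)
    finally show "(A * U) $$ (i,j) = ?B $$ (i,j)" .
  qed (auto simp: A_def U_def)
  ultimately show ?thesis
    using det_mult[OF A U] by (simp add: alternant_def A_def)
qed

lemma alternant_Suc: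
  fixes z :: "nat \<Rightarrow> 'a::comm_ring_1"
  assumes mono: "\<forall>j<n. e j \<le> e (Suc j)"
  shows "alternant (Suc n) e z = (-1)^n * z n ^ e 0 *
     det (mat n n (\<lambda>(i,j). z i ^ e (Suc j) - z n ^ (e (Suc j) - e j) * z i ^ e j))"
proof -
  define B where "B = mat (Suc n) (Suc n) (\<lambda>(i,j).
     z i ^ e j - (if j = 0 then 0 else z n ^ (e j - e (j - 1)) * z i ^ e (j - 1)))"
  have B: "B \<in> carrier_mat (Suc n) (Suc n)" by (simp add: B_def)
  have last_row: "B $$ (n, j) = (if j = 0 then z n ^ e 0 else 0)" if "j < Suc n" for j
  proof (cases j)
    case (Suc j')
    then have "z n ^ (e j - e j') * z n ^ e j' = z n ^ e j"
      using mono that by (simp add: power_add[symmetric])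
    then show ?thesis using that Suc by (simp add: B_def)
  qed (simp add: B_def)
  have "alternant (Suc n) e z = (\<Sum>j<Suc n. B $$ (n,j) * cofactor B n j)"
    unfolding alternant_eq_det_column_reduced B_def[symmetric]
    by (rule laplace_expansion_row[OF B]) simp
  also have "\<dots> = (\<Sum>j<Suc n. if j = 0 then z n ^ e 0 * cofactor B n 0 else 0)"
    by (rule sum.cong) (auto simp: last_row)
  also have "\<dots> = z n ^ e 0 * cofactor B n 0"
    by (simp add: sum.delta)
  moreover have "mat_delete B n 0
      = mat n n (\<lambda>(i,j). z i ^ e (Suc j) - z n ^ (e (Suc j) - e j) * z i ^ e j)"
    by (rule eq_matI) (auto simp: mat_delete_def B_def)
  ultimately show ?thesis by (simp add: cofactor_def)
qed

lemma det_mat_mult_rows: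
  fixes c :: "nat \<Rightarrow> 'a::comm_ring_1"
  shows "det (mat n n (\<lambda>(i,j). c i * f i j)) = (\<Prod>i<n. c i) * det (mat n n (\<lambda>(i,j). f i j))"
proof -
  let ?F = "mat n n (\<lambda>(i,j). f i j)"
  have A: "mat n n (\<lambda>(i,j). c i * f i j) \<in> carrier_mat n n" "?F \<in> carrier_mat n n"
    by auto
  show ?thesis unfolding det_def'[OF A(1)] det_def'[OF A(2)] sum_distrib_left
  proof (rule sum.cong[OF refl])
    fix p assume p: "p \<in> {p. p permutes {0..<n}}"
    have "(\<Prod>i = 0..<n. mat n n (\<lambda>(i,j). c i * f i j) $$ (i, p i))
        = (\<Prod>i = 0..<n. c i * ?F $$ (i, p i))"
      by (rule prod.cong, insert p, auto simp: permutes_def)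
    also have "\<dots> = (\<Prod>i<n. c i) * (\<Prod>i = 0..<n. ?F $$ (i, p i))"
      by (simp add: prod.distrib atLeast0LessThan)
    finally show "signof p * (\<Prod>i = 0..<n. mat n n (\<lambda>(i,j). c i * f i j) $$ (i, p i))
        = (\<Prod>i<n. c i) * (signof p * (\<Prod>i = 0..<n. ?F $$ (i, p i)))"
      by (simp add: algebra_simps)
  qed
qed

lemma alternant_Suc_vandermonde:
  fixes z :: "nat \<Rightarrow> 'a::comm_ring_1"
  shows "alternant (Suc n) (\<lambda>j. j) z = (\<Prod>k<n. z n - z k) * alternant n (\<lambda>j. j) z"
proof -
  have "alternant (Suc n) (\<lambda>j. j) z = (-1)^n * det (mat n n (\<lambda>(i,j). (z i - z n) * z i ^ j))"
    by (subst alternant_Suc) (simp_all add: algebra_simps)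
  also have "\<dots> = (-1)^n * ((\<Prod>i<n. z i - z n) * alternant n (\<lambda>j. j) z)"
    by (subst det_mat_mult_rows) (simp add: alternant_def)
  also have "(\<Prod>i<n. z i - z n) = (-1)^n * (\<Prod>k<n. z n - z k)"
    by (subst prod_diff_swap) simp
  finally show ?thesis by (simp flip: mult.assoc power_add add: mult_2[symmetric])
qed

lemma alternant_vandermonde_nonzero:
  fixes z :: "nat \<Rightarrow> 'a::idom"
  assumes "inj_on z {..<n}"
  shows "alternant n (\<lambda>j. j) z \<noteq> 0"
  using assms
proof (induction n)
  case 0 then show ?case by (simp add: alternant_def)
next
  case (Suc n)
  have "alternant n (\<lambda>j. j) z \<noteq> 0"
    using Suc inj_on_subset[OF Suc.prems, of "{..<n}"] by auto
  moreover have "(\<Prod>k<n. z n - z k) \<noteq> 0"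
    using inj_onD[OF Suc.prems, of n] by fastforce
  ultimately show ?case by (simp add: alternant_Suc_vandermonde)
qed
lemma diff_mult_sum_powers:
  fixes z y :: "'a::comm_ring_1"
  assumes "1 \<le> d"
  shows "(z - y) * (\<Sum>i\<in>{1..<d}. z ^ (d - i) * y ^ (a + i)) = z ^ d * y ^ Suc a - z * y ^ (a + d)"
  using assms
proof (induction d rule: dec_induct)
  case (step d)
  have "(\<Sum>i\<in>{1..<Suc d}. z ^ (Suc d - i) * y ^ (a + i))
      = (\<Sum>i\<in>{1..<d}. z ^ (Suc d - i) * y ^ (a + i)) + z * y ^ (a + d)"
    using step.hyps by (simp add: sum.atLeastLessThan_Suc)
  also have "(\<Sum>i\<in>{1..<d}. z ^ (Suc d - i) * y ^ (a + i))
      = z * (\<Sum>i\<in>{1..<d}. z ^ (d - i) * y ^ (a + i))"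
    unfolding sum_distrib_left by (rule sum.cong) (auto simp: Suc_diff_le)
  finally have "(z - y) * (\<Sum>i\<in>{1..<Suc d}. z ^ (Suc d - i) * y ^ (a + i))
      = z * ((z - y) * (\<Sum>i\<in>{1..<d}. z ^ (d - i) * y ^ (a + i))) + (z - y) * z * y ^ (a + d)"
    by (simp add: algebra_simps)
  also have "\<dots> = z * (z ^ d * y ^ Suc a - z * y ^ (a + d)) + (z - y) * z * y ^ (a + d)"
    by (simp only: step.IH)
  finally show ?case by (simp add: algebra_simps)
qed simp

definition interlace_weight :: "'a::comm_ring_1 \<Rightarrow> nat \<Rightarrow> nat \<Rightarrow> nat \<Rightarrow> 'a" where
  "interlace_weight q a b t = (if t = a then 1 else if t = b then - q else 1 - q)"

lemma diff_mult_sum_interlace_weight: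
  fixes z y q :: "'a::comm_ring_1"
  assumes "a < b"
  shows "(z - y) * (\<Sum>s\<in>{a..b}. interlace_weight q a b s * z ^ (b - s) * y ^ s)
    = (z - q * y) * (z ^ (b - a) * y ^ a - y ^ b)"
proof -
  define d where "d = b - a"
  have d1: "1 \<le> d" and b: "b = a + d" using assms by (auto simp: d_def)
  have split: "{a..b} = {a} \<union> (\<lambda>i. a + i) ` {1..<d} \<union> {b}" unfolding b
    by (auto simp: image_iff)
  have disj: "{a} \<inter> (\<lambda>i. a + i) ` {1..<d} = {}" "({a} \<union> (\<lambda>i. a + i) ` {1..<d}) \<inter> {b} = {}"
    using d1 unfolding b by auto
  have "(\<Sum>s\<in>(\<lambda>i. a + i) ` {1..<d}. interlace_weight q a b s * z ^ (b - s) * y ^ s)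
      = (1 - q) * (\<Sum>i\<in>{1..<d}. z ^ (d - i) * y ^ (a + i))"
    unfolding sum_distrib_left
    by (subst sum.reindex) (auto simp: inj_on_def interlace_weight_def b intro!: sum.cong)
  then have "(\<Sum>s\<in>{a..b}. interlace_weight q a b s * z ^ (b - s) * y ^ s)
      = z ^ d * y ^ a + (1 - q) * (\<Sum>i\<in>{1..<d}. z ^ (d - i) * y ^ (a + i)) - q * y ^ b"
    unfolding split using assms disj by (simp add: sum.union_disjoint interlace_weight_def d_def)
  then have "(z - y) * (\<Sum>s\<in>{a..b}. interlace_weight q a b s * z ^ (b - s) * y ^ s)
      = (z - y) * (z ^ d * y ^ a + (1 - q) * (\<Sum>i\<in>{1..<d}. z ^ (d - i) * y ^ (a + i)) - q * y ^ b)"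
    by simp
  also have "\<dots> = (z - y) * z ^ d * y ^ a
      + (1 - q) * ((z - y) * (\<Sum>i\<in>{1..<d}. z ^ (d - i) * y ^ (a + i))) - (z - y) * q * y ^ b"
    by (simp add: algebra_simps)
  also have "\<dots> = (z - y) * z ^ d * y ^ a + (1 - q) * (z ^ d * y ^ Suc a - z * y ^ (a + d))
      - (z - y) * q * y ^ b"
    by (simp only: diff_mult_sum_powers[OF d1])
  also have "\<dots> = (z - q * y) * (z ^ (b - a) * y ^ a - y ^ b)"
    unfolding b by (simp add: algebra_simps power_add)
  finally show ?thesis .
qed

lemma prod_interlace_weight:
  fixes q :: "'a::comm_ring_1"
  assumes s: "strict_mono_on {..<Suc r} s" and it: "interlaces r s t"
  shows "(\<Prod>j<r. interlace_weight q (s j) (s (Suc j)) (t j))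
    = (- q) ^ card {a. a < r \<and> t a = s (Suc a)}
      * (1 - q) ^ card {a. a < r \<and> s a < t a \<and> t a < s (Suc a)}"
proof -
  have "interlace_weight q (s j) (s (Suc j)) (t j)
      = (if t j = s (Suc j) then - q else 1) * (if s j < t j \<and> t j < s (Suc j) then 1 - q else 1)"
    if j: "j < r" for j
    using strict_mono_onD[OF s, of j "Suc j"] it j
    by (auto simp: interlaces_def interlace_weight_def)
  then have "(\<Prod>j<r. interlace_weight q (s j) (s (Suc j)) (t j))
      = (\<Prod>j<r. if t j = s (Suc j) then - q else 1)
        * (\<Prod>j<r. if s j < t j \<and> t j < s (Suc j) then 1 - q else 1)"
    by (simp add: prod.distrib[symmetric])
  then show ?thesis by (simp add: prod.If_cases Int_def)
qed

lemma det_mat_sum_columns: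
  fixes z :: "nat \<Rightarrow> 'a::comm_ring_1" and c :: "nat \<Rightarrow> nat \<Rightarrow> 'a"
  assumes fin: "\<And>j. finite (B j)"
  shows "(\<Sum>t\<in>PiE {..<n} B. (\<Prod>j<n. c j (t j)) * det (mat n n (\<lambda>(i,j). z i ^ t j)))
     = det (mat n n (\<lambda>(i,j). \<Sum>s\<in>B j. c j s * z i ^ s))"
proof -
  let ?P = "{p. p permutes {0..<n}}"
  have pin: "p j < n" if "p \<in> ?P" "j < n" for p j
    using that permutes_in_image[of p "{0..<n}" j] by auto
  have det_expand: "det (mat n n (\<lambda>(i,j). g i j)) = (\<Sum>p\<in>?P. signof p * (\<Prod>j<n. g (p j) j))"
    for g :: "nat \<Rightarrow> nat \<Rightarrow> 'a"
    by (subst det_col[of _ n]) (auto simp: pin intro!: sum.cong prod.cong)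
  have "(\<Sum>t\<in>PiE {..<n} B. (\<Prod>j<n. c j (t j)) * det (mat n n (\<lambda>(i,j). z i ^ t j)))
      = (\<Sum>p\<in>?P. signof p * (\<Sum>t\<in>PiE {..<n} B. \<Prod>j<n. c j (t j) * z (p j) ^ t j))"
    unfolding det_expand sum_distrib_left
    by (subst sum.swap) (auto simp: prod.distrib mult_ac intro!: sum.cong)
  also have "\<dots> = (\<Sum>p\<in>?P. signof p * (\<Prod>j<n. \<Sum>s\<in>B j. c j s * z (p j) ^ s))"
    by (simp add: prod_sum_PiE fin)
  also have "\<dots> = det (mat n n (\<lambda>(i,j). \<Sum>s\<in>B j. c j s * z i ^ s))"
    by (simp add: det_expand)
  finally show ?thesis .
qed

section \<open>Weighted sums over monotone triangles\<close>

definition interlacing_rows :: "(nat \<Rightarrow> nat) \<Rightarrow> nat \<Rightarrow> (nat \<Rightarrow> nat) set" where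
  "interlacing_rows e n = {t \<in> PiE {..<n} (\<lambda>j. {e j..e (Suc j)}). strict_mono_on {..<n} t}"

definition row_weight ::
    "'a::comm_ring_1 \<Rightarrow> (nat \<Rightarrow> 'a) \<Rightarrow> nat \<Rightarrow> (nat \<Rightarrow> nat) \<Rightarrow> (nat \<Rightarrow> nat) \<Rightarrow> 'a" where
  "row_weight q z n e t =
     (\<Prod>j<n. interlace_weight q (e j) (e (Suc j)) (t j)) * z n ^ ((\<Sum>j<Suc n. e j) - (\<Sum>j<n. t j))"

lemma finite_interlacing_rows: "finite (interlacing_rows e n)"
  unfolding interlacing_rows_def
  by (rule finite_subset[of _ "PiE {..<n} (\<lambda>j. {e j..e (Suc j)})"]) (auto intro: finite_PiE)

lemma row_weight_eq:
  assumes "t \<in> PiE {..<n} (\<lambda>j. {e j..e (Suc j)})"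
  shows "row_weight q z n e t
    = z n ^ e 0 * (\<Prod>j<n. interlace_weight q (e j) (e (Suc j)) (t j) * z n ^ (e (Suc j) - t j))"
proof -
  have le: "t j \<le> e (Suc j)" if "j < n" for j using assms that by (auto simp: PiE_iff)
  then have "(\<Sum>j<n. e (Suc j) - t j) = (\<Sum>j<n. e (Suc j)) - (\<Sum>j<n. t j)"
    using sum_subtractf_nat[of "{..<n}" t "\<lambda>j. e (Suc j)"] by auto
  moreover have "(\<Sum>j<n. t j) \<le> (\<Sum>j<n. e (Suc j))" using le by (auto intro: sum_mono)
  moreover have "(\<Sum>j<Suc n. e j) = e 0 + (\<Sum>j<n. e (Suc j))" by (rule sum.lessThan_Suc_shift)
  ultimately have "(\<Sum>j<Suc n. e j) - (\<Sum>j<n. t j) = e 0 + (\<Sum>j<n. e (Suc j) - t j)"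
    by simp
  then show ?thesis
    by (simp add: row_weight_def power_add power_sum prod.distrib algebra_simps)
qed

text \<open>Rows in the box that fail to be strictly increasing have two equal adjacent entries, hence
  contribute a vanishing alternant; the full box sum is a determinant by multilinearity.\<close>

lemma sum_interlacing_rows_alternant:
  fixes z :: "nat \<Rightarrow> 'a::comm_ring_1" and q :: 'a and e :: "nat \<Rightarrow> nat" and n :: nat
  defines "c \<equiv> \<lambda>j s. interlace_weight q (e j) (e (Suc j)) s * z n ^ (e (Suc j) - s)"
  shows "(\<Sum>t\<in>interlacing_rows e n. row_weight q z n e t * alternant n t z)
    = z n ^ e 0 * det (mat n n (\<lambda>(i,j). \<Sum>s\<in>{e j..e (Suc j)}. c j s * z i ^ s))"
proof -
  define Box where "Box = PiE {..<n} (\<lambda>j. {e j..e (Suc j)})"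
  have finB: "finite Box" unfolding Box_def by (auto intro: finite_PiE)
  have "(\<Sum>t\<in>interlacing_rows e n. row_weight q z n e t * alternant n t z)
      = (\<Sum>t\<in>Box. row_weight q z n e t * alternant n t z)"
  proof (rule sum.mono_neutral_left[OF finB])
    show "interlacing_rows e n \<subseteq> Box" unfolding interlacing_rows_def Box_def by auto
    show "\<forall>t\<in>Box - interlacing_rows e n. row_weight q z n e t * alternant n t z = 0"
    proof
      fix t assume t: "t \<in> Box - interlacing_rows e n"
      then obtain j where j: "Suc j < n" "\<not> t j < t (Suc j)"
        unfolding interlacing_rows_def Box_def strict_mono_on_lessThan_iff by auto
      have "t j \<le> e (Suc j)" "e (Suc j) \<le> t (Suc j)" using t j unfolding Box_def
        by (auto simp: PiE_iff)
      then have eq: "t j = t (Suc j)" using j by auto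
      have "alternant n t z = 0" unfolding alternant_def
        by (rule det_identical_columns[of _ n j "Suc j"]) (use j eq in \<open>auto simp: col_def\<close>)
      then show "row_weight q z n e t * alternant n t z = 0" by simp
    qed
  qed
  also have "\<dots> = (\<Sum>t\<in>Box. z n ^ e 0 * ((\<Prod>j<n. c j (t j)) * alternant n t z))"
    unfolding Box_def c_def by (intro sum.cong refl) (simp add: row_weight_eq mult_ac)
  also have "\<dots> = z n ^ e 0 * det (mat n n (\<lambda>(i,j). \<Sum>s\<in>{e j..e (Suc j)}. c j s * z i ^ s))"
    unfolding sum_distrib_left[symmetric] Box_def alternant_def
    by (subst det_mat_sum_columns) auto
  finally show ?thesis .
qed

lemma vandermonde_mult_sum_interlacing_rows:
  fixes z :: "nat \<Rightarrow> 'a::comm_ring_1"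
  assumes strict: "\<forall>j<n. e j < e (Suc j)"
  shows "(\<Prod>k<n. z n - z k) * (\<Sum>t\<in>interlacing_rows e n. row_weight q z n e t * alternant n t z)
    = (\<Prod>k<n. z n - q * z k) * alternant (Suc n) e z"
proof -
  define c where "c = (\<lambda>j s. interlace_weight q (e j) (e (Suc j)) s * z n ^ (e (Suc j) - s))"
  have L: "(\<Sum>t\<in>interlacing_rows e n. row_weight q z n e t * alternant n t z)
      = z n ^ e 0 * det (mat n n (\<lambda>(i,j). \<Sum>s\<in>{e j..e (Suc j)}. c j s * z i ^ s))"
    unfolding c_def by (rule sum_interlacing_rows_alternant)
  define D where "D = det (mat n n (\<lambda>(i,j). z i ^ e (Suc j) - z n ^ (e (Suc j) - e j) * z i ^ e j))"
  have "(\<Prod>k<n. z n - z k) * det (mat n n (\<lambda>(i,j). \<Sum>s\<in>{e j..e (Suc j)}. c j s * z i ^ s))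
      = det (mat n n (\<lambda>(i,j). (z n - z i) * (\<Sum>s\<in>{e j..e (Suc j)}. c j s * z i ^ s)))"
    by (simp add: det_mat_mult_rows)
  also have "\<dots> = det (mat n n (\<lambda>(i,j). (z n - q * z i) * (- 1 *
      (z i ^ e (Suc j) - z n ^ (e (Suc j) - e j) * z i ^ e j))))"
  proof -
    have "(z n - z i) * (\<Sum>s\<in>{e j..e (Suc j)}. c j s * z i ^ s)
        = (z n - q * z i) * (- 1 * (z i ^ e (Suc j) - z n ^ (e (Suc j) - e j) * z i ^ e j))"
      if "j < n" for i j
      using diff_mult_sum_interlace_weight[of "e j" "e (Suc j)" "z n" "z i" q] strict that
      by (simp add: c_def algebra_simps)
    then show ?thesis by (intro arg_cong[where f=det] eq_matI) auto
  qed
  also have "\<dots> = (\<Prod>k<n. z n - q * z k) * ((-1)^n * D)"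
    by (simp only: det_mat_mult_rows D_def) simp
  moreover have "alternant (Suc n) e z = (-1)^n * z n ^ e 0 * D"
    unfolding D_def by (rule alternant_Suc) (use strict in auto)
  ultimately show ?thesis unfolding L by (simp add: algebra_simps)
qed

text \<open>\<open>triangle_sum q z n e\<close> is the weighted sum over monotone triangles with top row \<open>e\<close>,
  built row by row (see \<open>triangle_sum_eq_sum_monotone_triangles\<close> below).\<close>

fun triangle_sum :: "'a::comm_ring_1 \<Rightarrow> (nat \<Rightarrow> 'a) \<Rightarrow> nat \<Rightarrow> (nat \<Rightarrow> nat) \<Rightarrow> 'a" where
  "triangle_sum q z 0 e = 1"
| "triangle_sum q z (Suc n) e =
     (\<Sum>t\<in>interlacing_rows e n. row_weight q z n e t * triangle_sum q z n t)"

definition q_vandermonde :: "'a::comm_ring_1 \<Rightarrow> (nat \<Rightarrow> 'a) \<Rightarrow> nat \<Rightarrow> 'a" where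
  "q_vandermonde q z n = (\<Prod>l<n. \<Prod>k<l. z l - q * z k)"

lemma triangle_sum_mult_alternant:
  fixes z :: "nat \<Rightarrow> 'a::comm_ring_1"
  assumes "strict_mono_on {..<n} e"
  shows "triangle_sum q z n e * alternant n (\<lambda>j. j) z = q_vandermonde q z n * alternant n e z"
  using assms
proof (induction n arbitrary: e)
  case 0 then show ?case by (simp add: q_vandermonde_def alternant_def)
next
  case (Suc n)
  have IH: "triangle_sum q z n t * alternant n (\<lambda>j. j) z = q_vandermonde q z n * alternant n t z"
    if "t \<in> interlacing_rows e n" for t
    using that by (intro Suc.IH) (auto simp: interlacing_rows_def)
  have "triangle_sum q z (Suc n) e * alternant (Suc n) (\<lambda>j. j) z
      = (\<Prod>k<n. z n - z k) * (\<Sum>t\<in>interlacing_rows e n.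
          row_weight q z n e t * (triangle_sum q z n t * alternant n (\<lambda>j. j) z))"
    by (simp add: alternant_Suc_vandermonde sum_distrib_left sum_distrib_right mult_ac)
  also have "\<dots> = (\<Prod>k<n. z n - z k) * (\<Sum>t\<in>interlacing_rows e n.
          row_weight q z n e t * (q_vandermonde q z n * alternant n t z))"
    by (simp add: IH cong: sum.cong)
  also have "\<dots> = q_vandermonde q z n * ((\<Prod>k<n. z n - z k) *
      (\<Sum>t\<in>interlacing_rows e n. row_weight q z n e t * alternant n t z))"
    by (simp add: sum_distrib_left mult_ac)
  also have "\<dots> = q_vandermonde q z (Suc n) * alternant (Suc n) e z"
    using Suc.prems
    by (subst vandermonde_mult_sum_interlacing_rows)
      (auto simp: q_vandermonde_def strict_mono_on_lessThan_iff)
  finally show ?case .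
qed

lemma poly_triangle_sum:
  fixes q :: "'a::comm_ring_1"
  shows "poly (triangle_sum [:q:] Z n e) 0 = triangle_sum q (\<lambda>i. poly (Z i) 0) n e"
proof (induction n arbitrary: e)
  case (Suc n)
  have "poly (interlace_weight [:q:] a b t) 0 = interlace_weight q a b t" for a b t
    by (simp add: interlace_weight_def)
  with Suc show ?case by (simp add: poly_sum poly_prod row_weight_def)
qed simp

text \<open>The alternant may be cancelled after passing to the generic points \<open>z i + X\<^sup>i\<^sup>+\<^sup>1\<close>,
  where the Vandermonde determinant is a nonzero polynomial.\<close>

lemma triangle_sum_staircase:
  fixes q :: "'a::idom" and z :: "nat \<Rightarrow> 'a"
  shows "triangle_sum q z n (\<lambda>j. j) = q_vandermonde q z n"
proof -
  define Z where "Z = (\<lambda>i. [:z i:] + monom 1 (Suc i))"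
  have inj: "inj_on Z {..<n}"
  proof (rule inj_onI)
    fix i j assume "Z i = Z j"
    then have "coeff (Z i) (Suc i) = coeff (Z j) (Suc i)" by simp
    then show "i = j" by (auto simp: Z_def coeff_monom split: if_splits)
  qed
  have "triangle_sum [:q:] Z n (\<lambda>j. j) * alternant n (\<lambda>j. j) Z
      = q_vandermonde [:q:] Z n * alternant n (\<lambda>j. j) Z"
    by (rule triangle_sum_mult_alternant) (simp add: strict_mono_on_def)
  then have "triangle_sum [:q:] Z n (\<lambda>j. j) = q_vandermonde [:q:] Z n"
    using alternant_vandermonde_nonzero[OF inj] by simp
  then have "poly (triangle_sum [:q:] Z n (\<lambda>j. j)) 0 = poly (q_vandermonde [:q:] Z n) 0" by simp
  moreover have "poly (Z i) 0 = z i" for i by (auto simp: Z_def poly_monom)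
  ultimately show ?thesis by (simp add: poly_triangle_sum q_vandermonde_def poly_prod)
qed

text \<open>A monotone triangle with top row \<open>e\<close> (of length \<open>n\<close>) is stored as the family of its rows
  \<open>tri r\<close> (of length \<open>r\<close>); the rows above \<open>n\<close> are fixed to \<open>undefined\<close> so that the
  representation is unique.\<close>

definition monotone_triangles :: "nat \<Rightarrow> (nat \<Rightarrow> nat) \<Rightarrow> (nat \<Rightarrow> nat \<Rightarrow> nat) set" where
  "monotone_triangles n e = {tri. tri n = e \<and> (\<forall>r<n. tri r \<in> interlacing_rows (tri (Suc r)) r)
      \<and> (\<forall>r>n. tri r = undefined)}"

lemma interlacing_rows_cong: "(\<forall>j\<le>n. e j = e' j) \<Longrightarrow> interlacing_rows e n = interlacing_rows e' n"
  unfolding interlacing_rows_def by (intro Collect_cong) (auto simp: PiE_iff)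

lemma triangle_sum_cong:
  assumes "\<forall>j<n. e j = e' j" shows "triangle_sum q z n e = triangle_sum q z n e'"
proof (cases n)
  case 0 then show ?thesis by simp
next
  case (Suc m)
  have sb: "interlacing_rows e m = interlacing_rows e' m" using assms Suc
    by (intro interlacing_rows_cong) auto
  have "row_weight q z m e t = row_weight q z m e' t" for t
    unfolding row_weight_def using assms Suc by (auto intro!: prod.cong sum.cong)
  then show ?thesis using Suc sb by simp
qed

lemma finite_monotone_triangles: "finite (monotone_triangles n e)"
proof (induction n arbitrary: e)
  case 0
  have "monotone_triangles 0 e \<subseteq> {\<lambda>r. if r = 0 then e else undefined}"
    by (auto simp: monotone_triangles_def)
  then show ?case by (rule finite_subset) auto
next
  case (Suc n)
  have "monotone_triangles (Suc n) e \<subseteq> (\<lambda>(t,tri). tri(Suc n := e)) ` (SIGMA t:interlacing_rows e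
      n. monotone_triangles n t)"
  proof
    fix tri assume tri: "tri \<in> monotone_triangles (Suc n) e"
    have "(tri n, tri(Suc n := undefined)) \<in> (SIGMA t:interlacing_rows e n. monotone_triangles n t)"
      using tri by (auto simp: monotone_triangles_def)
    moreover have "tri = tri(Suc n := e)" using tri by (auto simp: monotone_triangles_def)
    ultimately show "tri \<in> (\<lambda>(t,tri). tri(Suc n := e)) ` (SIGMA t:interlacing_rows e n.
        monotone_triangles n t)"
      by (auto intro!: image_eqI[of _ _ "(tri n, tri(Suc n := undefined))"])
  qed
  moreover have "finite (SIGMA t:interlacing_rows e n. monotone_triangles n t)"
    using Suc finite_interlacing_rows by auto
  ultimately show ?case by (rule finite_subset[OF _ finite_imageI])
qed

lemma triangle_sum_eq_sum_monotone_triangles: "triangle_sum q z n e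
    = (\<Sum>tri\<in>monotone_triangles n e. \<Prod>r<n. row_weight q z r (tri (Suc r)) (tri r))"
proof (induction n arbitrary: e)
  case 0
  have "monotone_triangles 0 e = {\<lambda>r. if r = 0 then e else undefined}"
    by (auto simp: monotone_triangles_def)
  then show ?case by simp
next
  case (Suc n)
  have pr: "(\<Prod>r<n. row_weight q z r ((a(Suc n := x)) (Suc r)) ((a(Suc n := x)) r))
        = (\<Prod>r<n. row_weight q z r (a (Suc r)) (a r))" for a x
    by (rule prod.cong) auto
  have "(\<Sum>tri\<in>monotone_triangles (Suc n) e. \<Prod>r<Suc n. row_weight q z r (tri (Suc r)) (tri r))
      = (\<Sum>(t,tri)\<in>(SIGMA t:interlacing_rows e n. monotone_triangles n t). row_weight q z n e t
          * (\<Prod>r<n. row_weight q z r (tri (Suc r)) (tri r)))"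
    by (rule sum.reindex_bij_witness[where i = "\<lambda>(t,tri). tri(Suc n := e)"
          and j = "\<lambda>tri. (tri n, tri(Suc n := undefined))"])
      (auto simp: monotone_triangles_def pr)
  also have "\<dots> = (\<Sum>t\<in>interlacing_rows e n. row_weight q z n e t
      * (\<Sum>tri\<in>monotone_triangles n t. \<Prod>r<n. row_weight q z r (tri (Suc r)) (tri r)))"
    by (subst sum.Sigma[symmetric]) (auto simp: finite_interlacing_rows finite_monotone_triangles
        sum_distrib_left)
  also have "\<dots> = triangle_sum q z (Suc n) e" by (simp add: Suc.IH)
  finally show ?case by simp
qed

section \<open>Alternating sign matrices as monotone triangles\<close>

definition staircase :: "nat \<Rightarrow> nat \<Rightarrow> nat" where
  "staircase \<alpha> = restrict (\<lambda>j. j) {..<\<alpha>}"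

text \<open>Row \<open>i\<close> of the triangle lists the (0-based) columns where the partial column sums of rows
  \<open>1..i\<close> of the matrix equal \<open>1\<close>; hence \<open>A\<^sub>i\<^sub>j = [j - 1 \<in> row i] - [j - 1 \<in> row (i - 1)]\<close>.\<close>

definition asm_of_triangle :: "nat \<Rightarrow> (nat \<Rightarrow> nat \<Rightarrow> nat) \<Rightarrow> nat \<Rightarrow> nat \<Rightarrow> int" where
  "asm_of_triangle \<alpha> tri i j = (if 1 \<le> i \<and> i \<le> \<alpha> \<and> 1 \<le> j \<and> j \<le> \<alpha> then
      of_bool (j - 1 \<in> tri i ` {..<i}) - of_bool (j - 1 \<in> tri (i - 1) ` {..<i - 1}) else 0)"

lemma sum_shifted_indicator_atMost:
  fixes V :: "nat set" and \<alpha> p :: nat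
  assumes "V \<subseteq> {..<\<alpha>}"
  shows "(\<Sum>j\<le>p. (if 1 \<le> j \<and> j \<le> \<alpha> then of_bool (j - 1 \<in> V) else 0)) = int (card (V \<inter> {..<p}))"
proof (induction p)
  case 0 then show ?case by simp
next
  case (Suc p)
  have fin: "finite V" using assms finite_subset by blast
  have "V \<inter> {..<Suc p} = (V \<inter> {..<p}) \<union> (if p \<in> V then {p} else {})" by (auto simp: less_Suc_eq)
  then have c: "card (V \<inter> {..<Suc p}) = card (V \<inter> {..<p}) + (if p \<in> V then 1 else 0)"
    using fin by (auto simp: card_insert_if)
  have "p \<in> V \<Longrightarrow> Suc p \<le> \<alpha>" using assms by auto
  then show ?case using Suc c by auto
qed

lemma card_image_Int_lessThan:
  assumes "inj_on f {..<n}"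
  shows "card (f ` {..<n} \<inter> {..<p}) = card {a. a < n \<and> f a < p}"
proof -
  have "f ` {..<n} \<inter> {..<p} = f ` {a. a < n \<and> f a < p}" by auto
  moreover have "inj_on f {a. a < n \<and> f a < p}" by (rule inj_on_subset[OF assms]) auto
  ultimately show ?thesis by (simp add: card_image)
qed

lemma sum_shifted_indicator_mult:
  fixes V :: "nat set" and \<alpha> :: nat
  assumes "V \<subseteq> {..<\<alpha>}"
  shows "(\<Sum>j\<in>{1..\<alpha>}. of_bool (j - 1 \<in> V) * F j) = (\<Sum>c\<in>V. F (Suc c) :: 'a::comm_ring_1)"
proof -
  have "(\<Sum>j\<in>{1..\<alpha>}. of_bool (j - 1 \<in> V) * F j) = (\<Sum>j\<in>Suc ` {..<\<alpha>}. of_bool (j - 1 \<in> V) * F j)"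
    by (simp only: image_Suc_lessThan)
  also have "\<dots> = (\<Sum>c\<in>{..<\<alpha>}. of_bool (c \<in> V) * F (Suc c))"
    by (subst sum.reindex) auto
  also have "\<dots> = (\<Sum>c\<in>{..<\<alpha>}. if c \<in> V then F (Suc c) else 0)"
    by (intro sum.cong) auto
  also have "\<dots> = (\<Sum>c\<in>{..<\<alpha>} \<inter> V. F (Suc c))"
    by (simp add: sum.inter_restrict)
  also have "{..<\<alpha>} \<inter> V = V" using assms by auto
  finally show ?thesis .
qed

context
  fixes \<alpha> :: nat and tri :: "nat \<Rightarrow> nat \<Rightarrow> nat"
  assumes tri: "tri \<in> monotone_triangles \<alpha> (staircase \<alpha>)"
begin

lemma triangle_top: "tri \<alpha> = staircase \<alpha>" using tri by (simp add: monotone_triangles_def)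
lemma triangle_row_interlacing: "r < \<alpha> \<Longrightarrow> tri r \<in> interlacing_rows (tri (Suc r)) r"
  using tri by (simp add: monotone_triangles_def)
lemma triangle_above: "\<alpha> < r \<Longrightarrow> tri r = undefined" using tri by (simp add: monotone_triangles_def)

lemma triangle_row_strict_mono: "r \<le> \<alpha> \<Longrightarrow> strict_mono_on {..<r} (tri r)"
proof (cases "r = \<alpha>")
  case True then show ?thesis using triangle_top by (auto simp: strict_mono_on_def staircase_def)
next
  case False
  assume "r \<le> \<alpha>" then have "r < \<alpha>" using False by simp
  then show ?thesis using triangle_row_interlacing[of r] by (auto simp: interlacing_rows_def)
qed

lemma triangle_row_interlaces: "r < \<alpha> \<Longrightarrow> interlaces r (tri (Suc r)) (tri r)"
  using triangle_row_interlacing[of r] by (auto simp: interlaces_def interlacing_rows_def PiE_iff)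

lemma triangle_row_undefined: "r \<le> \<alpha> \<Longrightarrow> r \<le> j \<Longrightarrow> tri r j = undefined"
proof (cases "r = \<alpha>")
  case True then show "r \<le> j \<Longrightarrow> ?thesis" using triangle_top by (auto simp: staircase_def)
next
  case False
  assume "r \<le> \<alpha>" "r \<le> j" then have "r < \<alpha>" using False by simp
  then show ?thesis using triangle_row_interlacing[of r] \<open>r \<le> j\<close>
    by (auto simp: interlacing_rows_def PiE_iff extensional_def)
qed

lemma triangle_row_less: "r \<le> \<alpha> \<Longrightarrow> j < r \<Longrightarrow> tri r j < \<alpha>"
proof (induction "\<alpha> - r" arbitrary: r j)
  case 0 then have "r = \<alpha>" by simp
  then show ?case using triangle_top 0 by (simp add: staircase_def)
next
  case (Suc k)
  then have r: "r < \<alpha>" by simp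
  have "tri r j \<le> tri (Suc r) (Suc j)" using triangle_row_interlaces[OF r] Suc.prems
    by (auto simp: interlaces_def)
  moreover have "tri (Suc r) (Suc j) < \<alpha>" using Suc r by auto
  ultimately show ?case by simp
qed

lemma triangle_row_image_subset: "r \<le> \<alpha> \<Longrightarrow> tri r ` {..<r} \<subseteq> {..<\<alpha>}"
  using triangle_row_less by auto

lemma triangle_top_image: "tri \<alpha> ` {..<\<alpha>} = {..<\<alpha>}"
  using triangle_top by (auto simp: staircase_def image_iff)

lemma asm_of_triangle_col_partial_sum:
  assumes j: "j \<in> {1..\<alpha>}"
  shows "(\<Sum>i\<le>p. asm_of_triangle \<alpha> tri i j) = of_bool (j - 1 \<in> tri (min p \<alpha>) ` {..<min p \<alpha>})"
proof (induction p)
  case 0 then show ?case by (simp add: asm_of_triangle_def)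
next
  case (Suc p)
  show ?case
  proof (cases "Suc p \<le> \<alpha>")
    case True
    then show ?thesis using Suc j by (simp add: asm_of_triangle_def min_def)
  next
    case False
    then have "asm_of_triangle \<alpha> tri (Suc p) j = 0" by (simp add: asm_of_triangle_def)
    moreover have "min (Suc p) \<alpha> = min p \<alpha>" using False by simp
    ultimately show ?thesis using Suc by simp
  qed
qed

lemma asm_of_triangle_row_partial_sum:
  assumes i: "i \<in> {1..\<alpha>}"
  shows "(\<Sum>j\<le>p. asm_of_triangle \<alpha> tri i j)
    = int (card {a. a < i \<and> tri i a < p}) - int (card {b. b < i - 1 \<and> tri (i - 1) b < p})"
proof -
  let ?U = "tri i ` {..<i}" and ?V = "tri (i - 1) ` {..<i - 1}"
  have "(\<Sum>j\<le>p. asm_of_triangle \<alpha> tri i j)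
      = (\<Sum>j\<le>p. if 1 \<le> j \<and> j \<le> \<alpha> then of_bool (j - 1 \<in> ?U) else 0)
        - (\<Sum>j\<le>p. if 1 \<le> j \<and> j \<le> \<alpha> then of_bool (j - 1 \<in> ?V) else 0)"
    unfolding sum_subtractf[symmetric] using i by (intro sum.cong) (auto simp: asm_of_triangle_def)
  also have "\<dots> = int (card (?U \<inter> {..<p})) - int (card (?V \<inter> {..<p}))"
  proof -
    have "?U \<subseteq> {..<\<alpha>}" "?V \<subseteq> {..<\<alpha>}"
      using i by (auto intro!: triangle_row_image_subset)
    then show ?thesis by (simp only: sum_shifted_indicator_atMost)
  qed
  also have "\<dots> = int (card {a. a < i \<and> tri i a < p}) - int (card {b. b < i - 1 \<and> tri (i - 1) b < p})"
  proof -
    have "inj_on (tri i) {..<i}" "inj_on (tri (i - 1)) {..<i - 1}"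
      using i by (auto intro!: strict_mono_on_imp_inj_on triangle_row_strict_mono)
    then show ?thesis by (simp only: card_image_Int_lessThan)
  qed
  finally show ?thesis .
qed

lemma asm_of_triangle_row_partial_sum_01:
  assumes i: "i \<in> {1..\<alpha>}"
  shows "(\<Sum>j\<le>p. asm_of_triangle \<alpha> tri i j) \<in> {0,1}"
proof -
  obtain r where r: "i = Suc r" "r < \<alpha>" using i by (cases i) auto
  have it: "interlaces r (tri i) (tri r)" using triangle_row_interlaces[OF r(2)] r by simp
  show ?thesis
    using interlaces_count_bounds[OF it, of p] asm_of_triangle_row_partial_sum[OF i, of p] r by auto
qed

lemma asm_of_triangle_row_sum:
  assumes i: "i \<in> {1..\<alpha>}"
  shows "(\<Sum>j\<in>{1..\<alpha>}. asm_of_triangle \<alpha> tri i j) = 1"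
proof -
  have "{..\<alpha>} = insert 0 {1..\<alpha>}" by auto
  then have "(\<Sum>j\<in>{1..\<alpha>}. asm_of_triangle \<alpha> tri i j) = (\<Sum>j\<le>\<alpha>. asm_of_triangle \<alpha> tri i j)"
    by (simp add: asm_of_triangle_def)
  also have "\<dots> = int (card {a. a < i}) - int (card {b. b < i - 1})"
    unfolding asm_of_triangle_row_partial_sum[OF i] using i triangle_row_less
    by (intro arg_cong2[where f = "\<lambda>m n. int (card m) - int (card n)"] Collect_cong) auto
  finally show ?thesis using i by simp
qed

lemma asm_of_triangle_col_sum: "j \<in> {1..\<alpha>} \<Longrightarrow> (\<Sum>i\<in>{1..\<alpha>}. asm_of_triangle \<alpha> tri i j) = 1"
proof -
  assume j: "j \<in> {1..\<alpha>}"
  have "{..\<alpha>} = insert 0 {1..\<alpha>}" by auto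
  then have "(\<Sum>i\<le>\<alpha>. asm_of_triangle \<alpha> tri i j) = (\<Sum>i\<in>{1..\<alpha>}. asm_of_triangle \<alpha> tri i j)"
    by (simp add: asm_of_triangle_def)
  moreover have "j - 1 < \<alpha>" using j by auto
  then have "(\<Sum>i\<le>\<alpha>. asm_of_triangle \<alpha> tri i j) = 1"
    using asm_of_triangle_col_partial_sum[OF j, of \<alpha>] by (simp add: triangle_top_image)
  ultimately show ?thesis by simp
qed

lemma asm_of_triangle_in_ASM: "asm_of_triangle \<alpha> tri \<in> ASM \<alpha>"
proof -
  let ?A = "asm_of_triangle \<alpha> tri"
  have vals: "\<forall>j. ?A i j \<in> {-1,0,1}" "\<forall>i. ?A i j \<in> {-1,0,1}" for i j
    by (auto simp: asm_of_triangle_def)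
  have rows: "\<forall>p. (\<Sum>j\<le>p. ?A i j) \<in> {0,1}" for i
  proof (cases "i \<in> {1..\<alpha>}")
    case False
    then have "?A i j = 0" for j by (auto simp: asm_of_triangle_def)
    then show ?thesis by simp
  qed (use asm_of_triangle_row_partial_sum_01 in blast)
  have cols: "\<forall>p. (\<Sum>i\<le>p. ?A i j) \<in> {0,1}" for j
  proof (cases "j \<in> {1..\<alpha>}")
    case False
    then have "?A i j = 0" for i by (auto simp: asm_of_triangle_def)
    then show ?thesis by simp
  qed (simp add: asm_of_triangle_col_partial_sum)
  show ?thesis unfolding ASM_def mem_Collect_eq
  proof (intro conjI allI impI ballI)
    show "?A i j1 = - ?A i j2"
      if "?A i j1 \<noteq> 0 \<and> ?A i j2 \<noteq> 0 \<and> j1 < j2 \<and> (\<forall>j. j1 < j \<and> j < j2 \<longrightarrow> ?A i j = 0)"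
      for i j1 j2
      using alternating_if_partial_sums_01[OF vals(1) rows] that by blast
    show "?A i1 j = - ?A i2 j"
      if "?A i1 j \<noteq> 0 \<and> ?A i2 j \<noteq> 0 \<and> i1 < i2 \<and> (\<forall>i. i1 < i \<and> i < i2 \<longrightarrow> ?A i j = 0)"
      for j i1 i2
      using alternating_if_partial_sums_01[where v = "\<lambda>i. ?A i j", OF vals(2) cols] that by blast
  qed (use vals asm_of_triangle_row_sum asm_of_triangle_col_sum in \<open>auto simp: asm_of_triangle_def\<close>)
qed

end


definition asm_row_set :: "nat \<Rightarrow> (nat \<Rightarrow> nat \<Rightarrow> int) \<Rightarrow> nat \<Rightarrow> nat set" where
  "asm_row_set \<alpha> A r = {c. c < \<alpha> \<and> (\<Sum>i\<in>{1..r}. A i (Suc c)) = 1}"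

definition triangle_of_asm :: "nat \<Rightarrow> (nat \<Rightarrow> nat \<Rightarrow> int) \<Rightarrow> nat \<Rightarrow> nat \<Rightarrow> nat" where
  "triangle_of_asm \<alpha> A r = (if r \<le> \<alpha> then restrict (sorted_nth (asm_row_set \<alpha> A r)) {..<r}
      else undefined)"

lemma triangle_of_asm_of_triangle:
  assumes tri: "tri \<in> monotone_triangles \<alpha> (staircase \<alpha>)"
  shows "triangle_of_asm \<alpha> (asm_of_triangle \<alpha> tri) = tri"
proof
  fix r show "triangle_of_asm \<alpha> (asm_of_triangle \<alpha> tri) r = tri r"
  proof (cases "r \<le> \<alpha>")
    case False then show ?thesis using triangle_above[OF tri] by (simp add: triangle_of_asm_def)
  next
    case True
    have U: "asm_row_set \<alpha> (asm_of_triangle \<alpha> tri) r = tri r ` {..<r}"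
    proof -
      have "(\<Sum>i\<in>{1..r}. asm_of_triangle \<alpha> tri i (Suc c)) = of_bool (c \<in> tri r ` {..<r})"
          if c: "c < \<alpha>" for c
      proof -
        have "{..r} = insert 0 {1..r}" by auto
        then have "(\<Sum>i\<in>{1..r}. asm_of_triangle \<alpha> tri i (Suc c))
            = (\<Sum>i\<le>r. asm_of_triangle \<alpha> tri i (Suc c))"
          by (simp add: asm_of_triangle_def)
        also have "\<dots> = of_bool (c \<in> tri r ` {..<r})"
          using asm_of_triangle_col_partial_sum[OF tri, of "Suc c" r] c True by (simp add: min_def)
        finally show ?thesis .
      qed
      then show ?thesis unfolding asm_row_set_def using triangle_row_image_subset[OF tri True]
        by auto
    qed
    show ?thesis
    proof
      fix j show "triangle_of_asm \<alpha> (asm_of_triangle \<alpha> tri) r j = tri r j"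
      proof (cases "j < r")
        case True
        then show ?thesis
          using \<open>r \<le> \<alpha>\<close> U sorted_nth_image_eq[OF triangle_row_strict_mono[OF tri \<open>r \<le> \<alpha>\<close>]]
          by (simp add: triangle_of_asm_def)
      next
        case False
        then show ?thesis using \<open>r \<le> \<alpha>\<close> triangle_row_undefined[OF tri \<open>r \<le> \<alpha>\<close>, of j]
          by (simp add: triangle_of_asm_def)
      qed
    qed
  qed
qed

context
  fixes \<alpha> :: nat and A :: "nat \<Rightarrow> nat \<Rightarrow> int"
  assumes A: "A \<in> ASM \<alpha>"
begin

lemma ASM_zero_outside: "i \<notin> {1..\<alpha>} \<or> j \<notin> {1..\<alpha>} \<Longrightarrow> A i j = 0"
  using A by (simp add: ASM_def)

lemma ASM_col_partial_sum_01: "(\<Sum>i\<in>{1..r}. A i j) \<in> {0,1}"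
proof (cases "j \<in> {1..\<alpha>}")
  case True
  have "(\<Sum>i\<le>r. A i j) \<in> {0,1}"
  proof (rule alternating_partial_sums_01[where v = "\<lambda>i. A i j" and n = \<alpha>])
    show "\<forall>i1 i2. A i1 j \<noteq> 0 \<and> A i2 j \<noteq> 0 \<and> i1 < i2 \<and> (\<forall>i. i1 < i \<and> i < i2 \<longrightarrow> A i j = 0)
        \<longrightarrow> A i1 j = - A i2 j"
      using A by (simp add: ASM_def)
    have "{..\<alpha>} = insert 0 {1..\<alpha>}" by auto
    then show "(\<Sum>i\<le>\<alpha>. A i j) = 1" using A True ASM_zero_outside[of 0 j] by (simp add: ASM_def)
  qed
  moreover have "{..r} = insert 0 {1..r}" by auto
  ultimately show ?thesis using ASM_zero_outside[of 0 j] by simp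
qed (use ASM_zero_outside in simp)

lemma ASM_col_partial_sum_eq:
  assumes "j \<in> {1..\<alpha>}"
  shows "(\<Sum>i\<in>{1..r}. A i j) = of_bool (j - 1 \<in> asm_row_set \<alpha> A r)"
proof -
  have "Suc (j - 1) = j" using assms by auto
  then show ?thesis
    using ASM_col_partial_sum_01[where r = r and j = j] assms by (auto simp: asm_row_set_def)
qed

lemma asm_row_set_subset: "asm_row_set \<alpha> A r \<subseteq> {..<\<alpha>}"
  by (auto simp: asm_row_set_def)

lemma finite_asm_row_set: "finite (asm_row_set \<alpha> A r)"
  using asm_row_set_subset finite_subset by blast

lemma card_asm_row_set:
  assumes r: "r \<le> \<alpha>"
  shows "card (asm_row_set \<alpha> A r) = r"
proof -
  have "(\<Sum>j\<in>{1..\<alpha>}. of_bool (j - 1 \<in> asm_row_set \<alpha> A r) * (1::int))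
      = (\<Sum>c\<in>asm_row_set \<alpha> A r. 1)"
    by (rule sum_shifted_indicator_mult[OF asm_row_set_subset])
  then have "int (card (asm_row_set \<alpha> A r))
      = (\<Sum>j\<in>{1..\<alpha>}. of_bool (j - 1 \<in> asm_row_set \<alpha> A r) * (1::int))"
    by simp
  also have "\<dots> = (\<Sum>j\<in>{1..\<alpha>}. \<Sum>i\<in>{1..r}. A i j)"
  proof (rule sum.cong[OF refl])
    fix j assume "j \<in> {1..\<alpha>}"
    then show "of_bool (j - 1 \<in> asm_row_set \<alpha> A r) * (1::int) = (\<Sum>i\<in>{1..r}. A i j)"
      using ASM_col_partial_sum_eq[where j = j and r = r] by simp
  qed
  also have "\<dots> = (\<Sum>i\<in>{1..r}. \<Sum>j\<in>{1..\<alpha>}. A i j)" by (rule sum.swap)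
  also have "\<dots> = (\<Sum>i\<in>{1..r}. 1)" using A r by (intro sum.cong) (auto simp: ASM_def)
  finally show ?thesis by simp
qed

lemma ASM_entry_eq:
  assumes i: "i \<in> {1..\<alpha>}" and j: "j \<in> {1..\<alpha>}"
  shows "A i j = of_bool (j - 1 \<in> asm_row_set \<alpha> A i) - of_bool (j - 1 \<in> asm_row_set \<alpha> A (i - 1))"
proof -
  have "{1..i} = insert i {1..i - 1}" using i by auto
  then have "(\<Sum>i'\<in>{1..i}. A i' j) = A i j + (\<Sum>i'\<in>{1..i - 1}. A i' j)"
    using i by (simp only:) (subst sum.insert, auto)
  then show ?thesis
    using ASM_col_partial_sum_eq[OF j, of i] ASM_col_partial_sum_eq[OF j, of "i - 1"] by simp
qed

lemma ASM_row_partial_sum: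
  assumes i: "i \<in> {1..\<alpha>}"
  shows "(\<Sum>j\<le>p. A i j)
    = int (card (asm_row_set \<alpha> A i \<inter> {..<p})) - int (card (asm_row_set \<alpha> A (i - 1) \<inter> {..<p}))"
proof -
  have "(\<Sum>j\<le>p. A i j)
      = (\<Sum>j\<le>p. if 1 \<le> j \<and> j \<le> \<alpha> then of_bool (j - 1 \<in> asm_row_set \<alpha> A i) else 0)
        - (\<Sum>j\<le>p. if 1 \<le> j \<and> j \<le> \<alpha> then of_bool (j - 1 \<in> asm_row_set \<alpha> A (i - 1)) else 0)"
    unfolding sum_subtractf[symmetric]
    by (intro sum.cong refl) (use ASM_entry_eq[OF i] ASM_zero_outside in auto)
  then show ?thesis by (simp only: sum_shifted_indicator_atMost[OF asm_row_set_subset])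
qed

lemma ASM_row_partial_sum_01:
  assumes i: "i \<in> {1..\<alpha>}"
  shows "(\<Sum>j\<le>p. A i j) \<in> {0,1}"
proof (rule alternating_partial_sums_01[where v = "A i" and n = \<alpha>])
  show "\<forall>j1 j2. A i j1 \<noteq> 0 \<and> A i j2 \<noteq> 0 \<and> j1 < j2 \<and> (\<forall>j. j1 < j \<and> j < j2 \<longrightarrow> A i j = 0)
      \<longrightarrow> A i j1 = - A i j2"
    using A by (simp add: ASM_def)
  have "{..\<alpha>} = insert 0 {1..\<alpha>}" by auto
  then show "(\<Sum>j\<le>\<alpha>. A i j) = 1" using A i ASM_zero_outside[of i 0] by (simp add: ASM_def)
qed

lemma strict_mono_on_sorted_asm_row_set:
  "r \<le> \<alpha> \<Longrightarrow> strict_mono_on {..<r} (sorted_nth (asm_row_set \<alpha> A r))"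
  using strict_mono_on_sorted_nth[OF finite_asm_row_set] card_asm_row_set by metis

lemma sorted_asm_row_set_image:
  "r \<le> \<alpha> \<Longrightarrow> sorted_nth (asm_row_set \<alpha> A r) ` {..<r} = asm_row_set \<alpha> A r"
  using sorted_nth_image[OF finite_asm_row_set] card_asm_row_set by metis

text \<open>The partial row sums of \<open>A\<close> are \<open>0\<close> or \<open>1\<close>, which is exactly the counting criterion for
  interlacing.\<close>

lemma sorted_asm_row_set_interlaces:
  assumes r: "r < \<alpha>"
  shows "interlaces r (sorted_nth (asm_row_set \<alpha> A (Suc r))) (sorted_nth (asm_row_set \<alpha> A r))"
proof -
  let ?U = "asm_row_set \<alpha> A (Suc r)" and ?V = "asm_row_set \<alpha> A r"
  have s: "strict_mono_on {..<Suc r} (sorted_nth ?U)" and t: "strict_mono_on {..<r} (sorted_nth ?V)"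
    using r by (auto intro: strict_mono_on_sorted_asm_row_set)
  have count_s: "card {a. a < Suc r \<and> sorted_nth ?U a < p} = card (?U \<inter> {..<p})" for p
    using card_image_Int_lessThan[OF strict_mono_on_imp_inj_on[OF s], of p]
      sorted_asm_row_set_image[of "Suc r"] r
    by simp
  have count_t: "card {b. b < r \<and> sorted_nth ?V b < p} = card (?V \<inter> {..<p})" for p
    using card_image_Int_lessThan[OF strict_mono_on_imp_inj_on[OF t], of p]
      sorted_asm_row_set_image[of r] r
    by simp
  have pre: "int (card (?U \<inter> {..<p})) - int (card (?V \<inter> {..<p})) \<in> {0,1}" for p
    using ASM_row_partial_sum[of "Suc r" p] ASM_row_partial_sum_01[of "Suc r" p] r by simp
  have "card (?V \<inter> {..<p}) \<le> card (?U \<inter> {..<p})" for p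
    using pre[of p] by auto
  moreover have "card (?U \<inter> {..<p}) \<le> Suc (card (?V \<inter> {..<p}))" for p
    using pre[of p] by auto
  ultimately show ?thesis
    by (intro interlaces_if_count_bounds[OF s t]) (simp_all only: count_s count_t)
qed

lemma triangle_of_asm_in_monotone_triangles:
  "triangle_of_asm \<alpha> A \<in> monotone_triangles \<alpha> (staircase \<alpha>)"
proof -
  have "asm_row_set \<alpha> A \<alpha> = {..<\<alpha>}"
    using card_asm_row_set[of \<alpha>] asm_row_set_subset by (simp add: card_subset_eq)
  then have "sorted_nth (asm_row_set \<alpha> A \<alpha>) j = j" if "j < \<alpha>" for j
    using sorted_nth_image_eq[of \<alpha> "\<lambda>j. j"] that by (simp add: strict_mono_on_def)
  then have top: "triangle_of_asm \<alpha> A \<alpha> = staircase \<alpha>"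
    by (auto simp: triangle_of_asm_def staircase_def)
  have "triangle_of_asm \<alpha> A r \<in> interlacing_rows (triangle_of_asm \<alpha> A (Suc r)) r" if r: "r < \<alpha>" for r
    using sorted_asm_row_set_interlaces[OF r] strict_mono_on_sorted_asm_row_set[of r] r
    by (auto simp: interlacing_rows_def triangle_of_asm_def interlaces_def PiE_iff strict_mono_on_def)
  then show ?thesis using top by (auto simp: monotone_triangles_def triangle_of_asm_def)
qed

lemma asm_of_triangle_of_asm: "asm_of_triangle \<alpha> (triangle_of_asm \<alpha> A) = A"
proof (intro ext)
  fix i j
  have row: "triangle_of_asm \<alpha> A k ` {..<k} = asm_row_set \<alpha> A k" if "k \<le> \<alpha>" for k
    using sorted_asm_row_set_image[OF that] that by (auto simp: triangle_of_asm_def)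
  show "asm_of_triangle \<alpha> (triangle_of_asm \<alpha> A) i j = A i j"
  proof (cases "i \<in> {1..\<alpha>} \<and> j \<in> {1..\<alpha>}")
    case True
    then have "triangle_of_asm \<alpha> A i ` {..<i} = asm_row_set \<alpha> A i"
      and "triangle_of_asm \<alpha> A (i - 1) ` {..<i - 1} = asm_row_set \<alpha> A (i - 1)"
      by (auto intro!: row)
    with True show ?thesis unfolding asm_of_triangle_def by (simp add: ASM_entry_eq)
  qed (use ASM_zero_outside in \<open>auto simp: asm_of_triangle_def\<close>)
qed

end

definition asm_weight :: "'a::field \<Rightarrow> (nat \<Rightarrow> 'a) \<Rightarrow> nat \<Rightarrow> (nat \<Rightarrow> nat \<Rightarrow> int) \<Rightarrow> 'a" where
  "asm_weight q y \<alpha> A = (- q) powi (inv_num \<alpha> A - int (neg_num \<alpha> A)) * (1 - q) ^ neg_num \<alpha> A *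
      (\<Prod>k<\<alpha>. y k powi (int \<alpha> - 1 - mvec \<alpha> A (Suc k)))"

context
  fixes \<alpha> :: nat and tri :: "nat \<Rightarrow> nat \<Rightarrow> nat"
  assumes tri: "tri \<in> monotone_triangles \<alpha> (staircase \<alpha>)"
begin

lemma asm_of_triangle_row_sum_mult:
  assumes i: "i \<in> {1..\<alpha>}"
  shows "(\<Sum>j\<in>{1..\<alpha>}. of_int (asm_of_triangle \<alpha> tri i j) * F j)
    = (\<Sum>c\<in>tri i ` {..<i}. F (Suc c)) - (\<Sum>c\<in>tri (i - 1) ` {..<i - 1}. F (Suc c) :: 'a::comm_ring_1)"
proof -
  let ?U = "tri i ` {..<i}" and ?V = "tri (i - 1) ` {..<i - 1}"
  have "(\<Sum>j\<in>{1..\<alpha>}. of_int (asm_of_triangle \<alpha> tri i j) * F j)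
      = (\<Sum>j\<in>{1..\<alpha>}. of_bool (j - 1 \<in> ?U) * F j) - (\<Sum>j\<in>{1..\<alpha>}. of_bool (j - 1 \<in> ?V) * F j)"
    unfolding sum_subtractf[symmetric] using i
    by (intro sum.cong) (auto simp: asm_of_triangle_def algebra_simps)
  also have "\<dots> = (\<Sum>c\<in>?U. F (Suc c)) - (\<Sum>c\<in>?V. F (Suc c))"
  proof -
    have "?U \<subseteq> {..<\<alpha>}" "?V \<subseteq> {..<\<alpha>}"
      using i by (auto intro!: triangle_row_image_subset[OF tri])
    then show ?thesis by (simp only: sum_shifted_indicator_mult)
  qed
  finally show ?thesis .
qed

lemma sum_triangle_row_image:
  assumes "r \<le> \<alpha>"
  shows "(\<Sum>c\<in>tri r ` {..<r}. F c) = (\<Sum>a<r. F (tri r a))"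
  using strict_mono_on_imp_inj_on[OF triangle_row_strict_mono[OF tri assms]]
  by (simp add: sum.reindex)

lemma mvec_asm_of_triangle:
  assumes k: "k < \<alpha>"
  shows "mvec \<alpha> (asm_of_triangle \<alpha> tri) (Suc k)
    = int \<alpha> - 1 - (int (\<Sum>j<Suc k. tri (Suc k) j) - int (\<Sum>j<k. tri k j))"
proof -
  have "mvec \<alpha> (asm_of_triangle \<alpha> tri) (Suc k)
      = (\<Sum>j\<in>{1..\<alpha>}. of_int (asm_of_triangle \<alpha> tri (Suc k) j) * (int \<alpha> - int j))"
    by (simp add: mvec_def)
  also have "\<dots> = (\<Sum>c\<in>tri (Suc k) ` {..<Suc k}. int \<alpha> - int (Suc c))
      - (\<Sum>c\<in>tri k ` {..<k}. int \<alpha> - int (Suc c))"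
    using asm_of_triangle_row_sum_mult[of "Suc k" "\<lambda>j. int \<alpha> - int j"] k by simp
  also have "\<dots> = (\<Sum>a<Suc k. int \<alpha> - int (Suc (tri (Suc k) a)))
      - (\<Sum>a<k. int \<alpha> - int (Suc (tri k a)))"
    using k by (simp add: sum_triangle_row_image)
  also have "\<dots> = int \<alpha> - 1 - (int (\<Sum>j<Suc k. tri (Suc k) j) - int (\<Sum>j<k. tri k j))"
  proof -
    have h: "(\<Sum>a<m. int \<alpha> - int (Suc (f a))) = int m * (int \<alpha> - 1) - int (\<Sum>a<m. f a)" for m f
      by (induction m) (simp_all add: algebra_simps)
    show ?thesis unfolding h by (simp add: algebra_simps)
  qed
  finally show ?thesis .
qed


lemma card_neg_row_asm_of_triangle:
  assumes k: "k < \<alpha>"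
  shows "card {j. j \<in> {1..\<alpha>} \<and> asm_of_triangle \<alpha> tri (Suc k) j = -1} =
     card {a. a < k \<and> tri (Suc k) a < tri k a \<and> tri k a < tri (Suc k) (Suc a)}"
proof -
  let ?s = "tri (Suc k)" and ?t = "tri k"
  have "{j. j \<in> {1..\<alpha>} \<and> asm_of_triangle \<alpha> tri (Suc k) j = -1}
      = Suc ` (?t ` {..<k} - ?s ` {..<Suc k})"
  proof (rule Set.set_eqI)
    fix j
    have sub: "?t ` {..<k} \<subseteq> {..<\<alpha>}" using triangle_row_image_subset[OF tri, of k] k by simp
    show "j \<in> {j. j \<in> {1..\<alpha>} \<and> asm_of_triangle \<alpha> tri (Suc k) j = -1}
        \<longleftrightarrow> j \<in> Suc ` (?t ` {..<k} - ?s ` {..<Suc k})"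
    proof (cases j)
      case 0 then show ?thesis by (auto simp: asm_of_triangle_def)
    next
      case (Suc c)
      have "c \<in> ?t ` {..<k} \<Longrightarrow> c < \<alpha>" using sub by auto
      then show ?thesis using Suc k by (auto simp: asm_of_triangle_def)
    qed
  qed
  also have "card \<dots> = card (?t ` {..<k} - ?s ` {..<Suc k})" by (simp add: card_image)
  also have "?t ` {..<k} - ?s ` {..<Suc k} = ?t ` {a. a < k \<and> ?s a < ?t a \<and> ?t a < ?s (Suc a)}"
    using interlaces_image_diff[OF triangle_row_strict_mono[OF tri] triangle_row_interlaces[OF tri k]]
      k by simp
  also have "card \<dots> = card {a. a < k \<and> ?s a < ?t a \<and> ?t a < ?s (Suc a)}"
    using strict_mono_on_imp_inj_on[OF triangle_row_strict_mono[OF tri, of k]] k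
    by (intro card_image) (auto intro: inj_on_subset)
  finally show ?thesis .
qed

lemma neg_num_asm_of_triangle:
  "neg_num \<alpha> (asm_of_triangle \<alpha> tri)
    = (\<Sum>k<\<alpha>. card {a. a < k \<and> tri (Suc k) a < tri k a \<and> tri k a < tri (Suc k) (Suc a)})"
proof -
  have "{(i,j). i \<in> {1..\<alpha>} \<and> j \<in> {1..\<alpha>} \<and> asm_of_triangle \<alpha> tri i j = -1}
      = Sigma {1..\<alpha>} (\<lambda>i. {j. j \<in> {1..\<alpha>} \<and> asm_of_triangle \<alpha> tri i j = -1})"
    by auto
  then have "neg_num \<alpha> (asm_of_triangle \<alpha> tri)
      = (\<Sum>i\<in>{1..\<alpha>}. card {j. j \<in> {1..\<alpha>} \<and> asm_of_triangle \<alpha> tri i j = -1})"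
    unfolding neg_num_def by (simp add: card_SigmaI)
  also have "\<dots> = (\<Sum>k<\<alpha>. card {j. j \<in> {1..\<alpha>} \<and> asm_of_triangle \<alpha> tri (Suc k) j = -1})"
    by (simp only: One_nat_def sum.atLeast1_atMost_eq)
  also have "\<dots> = (\<Sum>k<\<alpha>. card {a. a < k \<and> tri (Suc k) a < tri k a \<and> tri k a < tri (Suc k) (Suc a)})"
    by (rule sum.cong[OF refl], rule card_neg_row_asm_of_triangle) simp
  finally show ?thesis .
qed

lemma asm_of_triangle_col_sum_before:
  assumes i: "i \<in> {1..\<alpha>}" and l: "l \<in> {1..\<alpha>}"
  shows "(\<Sum>k\<in>{1..\<alpha>}. if k < i then asm_of_triangle \<alpha> tri k l else 0)
      = of_bool (l - 1 \<in> tri (i - 1) ` {..<i - 1})"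
proof -
  have "(\<Sum>k\<in>{1..\<alpha>}. if k < i then asm_of_triangle \<alpha> tri k l else 0)
      = (\<Sum>k\<le>i - 1. asm_of_triangle \<alpha> tri k l)"
  proof -
    have "(\<Sum>k\<in>{1..\<alpha>}. if k < i then asm_of_triangle \<alpha> tri k l else 0)
        = (\<Sum>k\<in>{1..\<alpha>} \<inter> {k. k < i}. asm_of_triangle \<alpha> tri k l)"
      by (simp add: sum.inter_restrict)
    also have "{1..\<alpha>} \<inter> {k. k < i} = {1..i - 1}" using i by auto
    also have "(\<Sum>k\<in>{1..i - 1}. asm_of_triangle \<alpha> tri k l) = (\<Sum>k\<le>i - 1. asm_of_triangle \<alpha> tri k l)"
    proof -
      have "{..i - 1} = insert 0 {1..i - 1}" by auto
      then show ?thesis by (simp add: asm_of_triangle_def)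
    qed
    finally show ?thesis .
  qed
  also have "\<dots> = of_bool (l - 1 \<in> tri (i - 1) ` {..<i - 1})"
  proof -
    have h: "min (i - 1) \<alpha> = i - 1" using i by auto
    show ?thesis using asm_of_triangle_col_partial_sum[OF tri l, of "i - 1"] unfolding h .
  qed
  finally show ?thesis .
qed

text \<open>The inversions of \<open>A\<close> with lower entry in row \<open>k + 1\<close>, column \<open>j\<close>: the entries of the
  rows above add up, column by column, to the indicator of row \<open>k\<close> of the triangle.\<close>

lemma sum_inversions_entry_asm_of_triangle:
  assumes k: "k < \<alpha>"
  shows "(\<Sum>k'\<in>{1..\<alpha>}. \<Sum>l\<in>{1..\<alpha>}. if k' < Suc k \<and> j < l
      then asm_of_triangle \<alpha> tri (Suc k) j * asm_of_triangle \<alpha> tri k' l else 0)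
    = asm_of_triangle \<alpha> tri (Suc k) j * (\<Sum>d\<in>tri k ` {..<k}. of_bool (j < Suc d))"
proof -
  let ?A = "asm_of_triangle \<alpha> tri"
  have i: "Suc k \<in> {1..\<alpha>}" using k by auto
  have "(\<Sum>k'\<in>{1..\<alpha>}. \<Sum>l\<in>{1..\<alpha>}. if k' < Suc k \<and> j < l then ?A (Suc k) j * ?A k' l else 0)
      = (\<Sum>l\<in>{1..\<alpha>}. ?A (Suc k) j *
          (if j < l then (\<Sum>k'\<in>{1..\<alpha>}. if k' < Suc k then ?A k' l else 0) else 0))"
    by (subst sum.swap) (auto simp: sum_distrib_left intro!: sum.cong)
  also have "\<dots> = ?A (Suc k) j * (\<Sum>l\<in>{1..\<alpha>}. of_bool (l - 1 \<in> tri k ` {..<k}) * of_bool (j < l))"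
    unfolding sum_distrib_left
    by (intro sum.cong refl) (use asm_of_triangle_col_sum_before[OF i] in auto)
  also have "(\<Sum>l\<in>{1..\<alpha>}. of_bool (l - 1 \<in> tri k ` {..<k}) * of_bool (j < l))
      = (\<Sum>d\<in>tri k ` {..<k}. of_bool (j < Suc d) :: int)"
    by (rule sum_shifted_indicator_mult) (rule triangle_row_image_subset[OF tri], use k in auto)
  finally show ?thesis .
qed

lemma inv_num_row_asm_of_triangle:
  assumes k: "k < \<alpha>"
  shows "(\<Sum>j\<in>{1..\<alpha>}. \<Sum>k'\<in>{1..\<alpha>}. \<Sum>l\<in>{1..\<alpha>}. if k' < Suc k \<and> j < l
      then asm_of_triangle \<alpha> tri (Suc k) j * asm_of_triangle \<alpha> tri k' l else 0)
    = int (card {a. a < k \<and> tri (Suc k) a < tri k a})"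
proof -
  let ?s = "tri (Suc k)" and ?t = "tri k"
  have i: "Suc k \<in> {1..\<alpha>}" using k by auto
  have count: "(\<Sum>d\<in>?t ` {..<k}. (of_bool (Suc c < Suc d) :: int))
      = int (card {b. b < k \<and> c < ?t b})" for c
  proof -
    have "(\<Sum>d\<in>?t ` {..<k}. (of_bool (Suc c < Suc d) :: int)) = (\<Sum>b<k. of_bool (Suc c < Suc (?t b)))"
      by (rule sum_triangle_row_image) (use k in auto)
    then show ?thesis by (simp add: Int_def conj_commute)
  qed
  have "(\<Sum>j\<in>{1..\<alpha>}. \<Sum>k'\<in>{1..\<alpha>}. \<Sum>l\<in>{1..\<alpha>}. if k' < Suc k \<and> j < l
        then asm_of_triangle \<alpha> tri (Suc k) j * asm_of_triangle \<alpha> tri k' l else 0)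
      = (\<Sum>j\<in>{1..\<alpha>}. of_int (asm_of_triangle \<alpha> tri (Suc k) j)
          * (\<Sum>d\<in>?t ` {..<k}. of_bool (j < Suc d)))"
    using sum_inversions_entry_asm_of_triangle[OF k] by (intro sum.cong) simp_all
  also have "\<dots> = (\<Sum>c\<in>?s ` {..<Suc k}. \<Sum>d\<in>?t ` {..<k}. (of_bool (Suc c < Suc d) :: int))
       - (\<Sum>c\<in>?t ` {..<k}. \<Sum>d\<in>?t ` {..<k}. (of_bool (Suc c < Suc d) :: int))"
    using asm_of_triangle_row_sum_mult[OF i, of "\<lambda>j. \<Sum>d\<in>?t ` {..<k}. of_bool (j < Suc d) :: int"]
    by simp
  also have "\<dots> = (\<Sum>c\<in>?s ` {..<Suc k}. int (card {b. b < k \<and> c < ?t b}))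
       - (\<Sum>c\<in>?t ` {..<k}. int (card {b. b < k \<and> c < ?t b}))"
    by (simp only: count)
  also have "\<dots> = int (\<Sum>a<Suc k. card {b. b < k \<and> ?s a < ?t b})
      - int (\<Sum>a<k. card {b. b < k \<and> ?t a < ?t b})"
    using k by (simp add: sum_triangle_row_image of_nat_sum)
  also have "\<dots> = int (card {a. a < k \<and> ?s a < ?t a})"
    using interlaces_sum_card_less[OF triangle_row_strict_mono[OF tri]
        triangle_row_strict_mono[OF tri] triangle_row_interlaces[OF tri k]] k
    by simp
  finally show ?thesis .
qed

lemma inv_num_asm_of_triangle:
  "inv_num \<alpha> (asm_of_triangle \<alpha> tri)
    = (\<Sum>k<\<alpha>. int (card {a. a < k \<and> tri (Suc k) a < tri k a}))"
proof -
  have "inv_num \<alpha> (asm_of_triangle \<alpha> tri)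
      = (\<Sum>k<\<alpha>. \<Sum>j\<in>{1..\<alpha>}. \<Sum>k'\<in>{1..\<alpha>}. \<Sum>l\<in>{1..\<alpha>}. if k' < Suc k \<and> j < l
          then asm_of_triangle \<alpha> tri (Suc k) j * asm_of_triangle \<alpha> tri k' l else 0)"
    unfolding inv_num_def by (simp only: One_nat_def sum.atLeast1_atMost_eq)
  also have "\<dots> = (\<Sum>k<\<alpha>. int (card {a. a < k \<and> tri (Suc k) a < tri k a}))"
    by (rule sum.cong[OF refl], rule inv_num_row_asm_of_triangle) simp
  finally show ?thesis .
qed

lemma inv_num_minus_neg_num_asm_of_triangle:
  "inv_num \<alpha> (asm_of_triangle \<alpha> tri) - int (neg_num \<alpha> (asm_of_triangle \<alpha> tri))
    = int (\<Sum>k<\<alpha>. card {a. a < k \<and> tri k a = tri (Suc k) (Suc a)})"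
proof -
  have "card {a. a < k \<and> tri (Suc k) a < tri k a}
      = card {a. a < k \<and> tri k a = tri (Suc k) (Suc a)}
        + card {a. a < k \<and> tri (Suc k) a < tri k a \<and> tri k a < tri (Suc k) (Suc a)}"
    if "k < \<alpha>" for k
    using card_interlacing_less_split[OF triangle_row_strict_mono[OF tri]
        triangle_row_interlaces[OF tri that]] that
    by simp
  then show ?thesis
    unfolding inv_num_asm_of_triangle neg_num_asm_of_triangle
    by (simp add: of_nat_sum sum.distrib)
qed

lemma power_int_mvec_asm_of_triangle:
  assumes k: "k < \<alpha>"
  shows "y k powi (int \<alpha> - 1 - mvec \<alpha> (asm_of_triangle \<alpha> tri) (Suc k))
    = y k ^ ((\<Sum>j<Suc k. tri (Suc k) j) - (\<Sum>j<k. tri k j))"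
proof -
  have "(\<Sum>j<k. tri k j) \<le> (\<Sum>j<k. tri (Suc k) (Suc j))"
    by (rule sum_mono) (use triangle_row_interlaces[OF tri k] in \<open>auto simp: interlaces_def\<close>)
  also have "\<dots> \<le> (\<Sum>j<Suc k. tri (Suc k) j)"
    unfolding sum.lessThan_Suc_shift by simp
  finally have "(\<Sum>j<k. tri k j) \<le> (\<Sum>j<Suc k. tri (Suc k) j)" .
  then have "int \<alpha> - 1 - mvec \<alpha> (asm_of_triangle \<alpha> tri) (Suc k)
      = int ((\<Sum>j<Suc k. tri (Suc k) j) - (\<Sum>j<k. tri k j))"
    unfolding mvec_asm_of_triangle[OF k] by (simp only: of_nat_diff)
  then show ?thesis by simp
qed

lemma asm_weight_asm_of_triangle:
  fixes q :: "'a::field"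
  shows "asm_weight q y \<alpha> (asm_of_triangle \<alpha> tri) = (\<Prod>k<\<alpha>. row_weight q y k (tri (Suc k)) (tri k))"
proof -
  define req where "req k = card {a. a < k \<and> tri k a = tri (Suc k) (Suc a)}" for k
  define mid where
    "mid k = card {a. a < k \<and> tri (Suc k) a < tri k a \<and> tri k a < tri (Suc k) (Suc a)}" for k
  define D where "D k = (\<Sum>j<Suc k. tri (Suc k) j) - (\<Sum>j<k. tri k j)" for k
  have "row_weight q y k (tri (Suc k)) (tri k) = (- q) ^ req k * (1 - q) ^ mid k * y k ^ D k"
    if k: "k < \<alpha>" for k
    unfolding row_weight_def req_def mid_def D_def
    by (subst prod_interlace_weight[OF triangle_row_strict_mono[OF tri]
          triangle_row_interlaces[OF tri k]]) (use k in auto)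
  then have "(\<Prod>k<\<alpha>. row_weight q y k (tri (Suc k)) (tri k))
      = (- q) ^ (\<Sum>k<\<alpha>. req k) * (1 - q) ^ (\<Sum>k<\<alpha>. mid k) * (\<Prod>k<\<alpha>. y k ^ D k)"
    by (simp add: power_sum prod.distrib)
  also have "\<dots> = asm_weight q y \<alpha> (asm_of_triangle \<alpha> tri)"
  proof -
    have "(\<Prod>k<\<alpha>. y k ^ D k) = (\<Prod>k<\<alpha>. y k powi (int \<alpha> - 1 - mvec \<alpha> (asm_of_triangle \<alpha> tri) (Suc k)))"
      by (intro prod.cong refl) (simp add: power_int_mvec_asm_of_triangle D_def)
    then show ?thesis
      unfolding asm_weight_def inv_num_minus_neg_num_asm_of_triangle
      unfolding neg_num_asm_of_triangle req_def mid_def power_int_of_nat by simp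
  qed
  finally show ?thesis ..
qed

end

theorem sum_asm_weight_eq_q_vandermonde:
  fixes q :: "'a::field"
  shows "(\<Sum>A\<in>ASM \<alpha>. asm_weight q y \<alpha> A) = q_vandermonde q y \<alpha>"
proof -
  have "(\<Sum>A\<in>ASM \<alpha>. asm_weight q y \<alpha> A)
      = (\<Sum>tri\<in>monotone_triangles \<alpha> (staircase \<alpha>). asm_weight q y \<alpha> (asm_of_triangle \<alpha> tri))"
    by (rule sum.reindex_bij_witness[where i = "asm_of_triangle \<alpha>" and j = "triangle_of_asm \<alpha>"])
      (auto simp: asm_of_triangle_of_asm triangle_of_asm_in_monotone_triangles
        triangle_of_asm_of_triangle asm_of_triangle_in_ASM)
  also have "\<dots> = (\<Sum>tri\<in>monotone_triangles \<alpha> (staircase \<alpha>).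
      \<Prod>k<\<alpha>. row_weight q y k (tri (Suc k)) (tri k))"
    by (intro sum.cong refl) (simp add: asm_weight_asm_of_triangle)
  also have "\<dots> = triangle_sum q y \<alpha> (staircase \<alpha>)"
    by (simp add: triangle_sum_eq_sum_monotone_triangles)
  also have "\<dots> = triangle_sum q y \<alpha> (\<lambda>j. j)"
    by (rule triangle_sum_cong) (simp add: staircase_def)
  also have "\<dots> = q_vandermonde q y \<alpha>"
    by (rule triangle_sum_staircase)
  finally show ?thesis .
qed

section \<open>From Laurent polynomials to the operators \<open>M\<^sub>n\<close>\<close>

definition laurent_monomial :: "(nat \<Rightarrow> 'a::field) \<Rightarrow> int list \<Rightarrow> 'a" where
  "laurent_monomial y es = (\<Prod>k<length es. y k powi (es ! k))"

lemma laurent_monomial_Cons: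
  "laurent_monomial y (e # es) = y 0 powi e * laurent_monomial (\<lambda>k. y (Suc k)) es"
  unfolding laurent_monomial_def length_Cons prod.lessThan_Suc_shift by simp

lemma laurent_monomial_map_upt:
  "laurent_monomial y (map g [1..<n+1]) = (\<Prod>k<n. y k powi g (Suc k))"
  by (auto simp: laurent_monomial_def simp del: upt_Suc intro!: prod.cong)

lemma opprod_Mop_Cons:
  "opprod (map (Mop q N) (e # es)) f x = (\<Sum>i\<in>{1..N}. (\<Prod>j\<in>{1..N} - {i}. x i / (x i - x j)) *
     (x i powi e * opprod (map (Mop q N) es) f (x(i := q * x i))))"
  by (simp add: opprod_def Mop_def mult_ac)

lemma sum_opprod_Mop_expand:
  assumes "\<forall>s\<in>S. E s \<noteq> []"
  shows "(\<Sum>s\<in>S. c s * opprod (map (Mop q N) (E s)) f x)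
    = (\<Sum>i\<in>{1..N}. (\<Prod>j\<in>{1..N} - {i}. x i / (x i - x j)) *
        (\<Sum>s\<in>S. c s * x i powi hd (E s) * opprod (map (Mop q N) (tl (E s))) f (x(i := q * x i))))"
proof -
  have "c s * opprod (map (Mop q N) (E s)) f x = (\<Sum>i\<in>{1..N}. (\<Prod>j\<in>{1..N} - {i}. x i / (x i - x j)) *
      (c s * x i powi hd (E s) * opprod (map (Mop q N) (tl (E s))) f (x(i := q * x i))))"
    if "s \<in> S" for s
    using assms that opprod_Mop_Cons[of q N "hd (E s)" "tl (E s)" f x]
    by (simp add: sum_distrib_left ac_simps)
  then show ?thesis
    by (simp add: sum.swap[of _ S] sum_distrib_left cong: sum.cong)
qed

lemma sum_opprod_Mop_eq_if_laurent_eq: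
  fixes q :: "'a::field" and c :: "'s \<Rightarrow> 'a" and d :: "'t \<Rightarrow> 'a"
  assumes "finite S" "finite T" "q \<noteq> 0"
    and "\<forall>i\<in>{1..N}. x i \<noteq> 0"
    and "\<forall>s\<in>S. length (E s) = L" "\<forall>t\<in>T. length (F t) = L"
    and "\<forall>y. (\<forall>k<L. y k \<noteq> 0) \<longrightarrow>
      (\<Sum>s\<in>S. c s * laurent_monomial y (E s)) = (\<Sum>t\<in>T. d t * laurent_monomial y (F t))"
  shows "(\<Sum>s\<in>S. c s * opprod (map (Mop q N) (E s)) f x)
    = (\<Sum>t\<in>T. d t * opprod (map (Mop q N) (F t)) f x)"
  using assms(4-)
proof (induction L arbitrary: c d E F x)
  case 0
  have "E s = []" if "s \<in> S" for s using 0 that by auto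
  moreover have "F t = []" if "t \<in> T" for t using 0 that by auto
  moreover have "(\<Sum>s\<in>S. c s) = (\<Sum>t\<in>T. d t)" using 0 by (simp add: laurent_monomial_def)
  ultimately show ?case by (simp add: opprod_def sum_distrib_right[symmetric])
next
  case (Suc L)
  define C where "C i = (\<Prod>j\<in>{1..N} - {i}. x i / (x i - x j))" for i
  define x' where "x' i = x(i := q * x i)" for i
  have E: "\<forall>s\<in>S. E s \<noteq> []" and F: "\<forall>t\<in>T. F t \<noteq> []"
    using Suc.prems(2,3) by auto
  have hd_tl: "laurent_monomial (case_nat v y) es = v powi hd es * laurent_monomial y (tl es)"
    if "es \<noteq> []" for v and y :: "nat \<Rightarrow> 'a" and es
    using that by (cases es) (simp_all add: laurent_monomial_Cons)
  have step: "(\<Sum>s\<in>S. c s * x i powi hd (E s) * opprod (map (Mop q N) (tl (E s))) f (x' i))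
      = (\<Sum>t\<in>T. d t * x i powi hd (F t) * opprod (map (Mop q N) (tl (F t))) f (x' i))"
    if i: "i \<in> {1..N}" for i
  proof (rule Suc.IH)
    show "\<forall>j\<in>{1..N}. x' i j \<noteq> 0" using Suc.prems(1) assms(3) i by (auto simp: x'_def)
    show "\<forall>s\<in>S. length (tl (E s)) = L" "\<forall>t\<in>T. length (tl (F t)) = L"
      using Suc.prems(2,3) by auto
    show "\<forall>y. (\<forall>k<L. y k \<noteq> 0) \<longrightarrow>
        (\<Sum>s\<in>S. c s * x i powi hd (E s) * laurent_monomial y (tl (E s))) =
        (\<Sum>t\<in>T. d t * x i powi hd (F t) * laurent_monomial y (tl (F t)))"
    proof (intro allI impI)
      fix y :: "nat \<Rightarrow> 'a" assume "\<forall>k<L. y k \<noteq> 0"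
      then have "\<forall>k<Suc L. case_nat (x i) y k \<noteq> 0"
        using Suc.prems(1) i by (auto simp: less_Suc_eq_0_disj)
      then have "(\<Sum>s\<in>S. c s * laurent_monomial (case_nat (x i) y) (E s))
          = (\<Sum>t\<in>T. d t * laurent_monomial (case_nat (x i) y) (F t))"
        using Suc.prems(4) by blast
      then show "(\<Sum>s\<in>S. c s * x i powi hd (E s) * laurent_monomial y (tl (E s))) =
          (\<Sum>t\<in>T. d t * x i powi hd (F t) * laurent_monomial y (tl (F t)))"
        using E F by (simp add: hd_tl mult.assoc cong: sum.cong)
    qed
  qed
  show ?case
    unfolding sum_opprod_Mop_expand[OF E] sum_opprod_Mop_expand[OF F] using step
      by (simp add: C_def x'_def)
qed

section \<open>The Laurent polynomial identity\<close>

lemma finite_pairs: "finite (pairs \<alpha>)"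
  by (rule finite_subset[of _ "{1..\<alpha>} \<times> {1..\<alpha>}"]) (auto simp: pairs_def)

lemma card_in_pairs_insert:
  assumes "finite S" "(a,b) \<notin> S"
  shows "card {i. (i,k) \<in> insert (a,b) S} = card {i. (i,k) \<in> S} + of_bool (k = b)"
proof -
  have fin: "finite {i. (i,k) \<in> S}"
    by (rule finite_subset[of _ "fst ` S"]) (use assms(1) in \<open>auto intro: rev_image_eqI\<close>)
  have eq: "{i. (i,k) \<in> insert (a,b) S} = (if k = b then insert a else id) {i. (i,k) \<in> S}"
    by auto
  show ?thesis unfolding eq using fin assms(2) by (cases "k = b") (simp_all add: card_insert_if)
qed

lemma card_out_pairs_insert:
  assumes "finite S" "(a,b) \<notin> S"
  shows "card {j. (k,j) \<in> insert (a,b) S} = card {j. (k,j) \<in> S} + of_bool (k = a)"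
proof -
  have fin: "finite {j. (k,j) \<in> S}"
    by (rule finite_subset[of _ "snd ` S"]) (use assms(1) in \<open>auto intro: rev_image_eqI\<close>)
  have eq: "{j. (k,j) \<in> insert (a,b) S} = (if k = a then insert b else id) {j. (k,j) \<in> S}"
    by auto
  show ?thesis unfolding eq using fin assms(2) by (cases "k = a") (simp_all add: card_insert_if)
qed

lemma prod_lessThan_delta_Suc:
  assumes "1 \<le> a" "a \<le> \<alpha>"
  shows "(\<Prod>k<\<alpha>. if Suc k = a then g k else 1) = g (a - 1)"
proof -
  have "(\<Prod>k<\<alpha>. if Suc k = a then g k else 1) = (\<Prod>k<\<alpha>. if k = a - 1 then g k else 1)"
    using assms by (intro prod.cong) auto
  also have "\<dots> = g (a - 1)"
  proof -
    have "a - 1 < \<alpha>" using assms by auto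
    then show ?thesis by (simp add: prod.delta)
  qed
  finally show ?thesis .
qed

lemma prod_powi_minus_shift_exp:
  fixes y :: "nat \<Rightarrow> 'a::field"
  assumes S: "S \<subseteq> pairs \<alpha>" and y: "\<forall>k<\<alpha>. y k \<noteq> 0"
  shows "(\<Prod>k<\<alpha>. y k powi (- shift_exp S (Suc k))) = (\<Prod>p\<in>S. y (fst p - 1) / y (snd p - 1))"
proof -
  have "finite S" using S finite_pairs finite_subset by blast
  then show ?thesis using S
  proof (induction rule: finite_subset_induct)
    case empty then show ?case by (simp add: shift_exp_def)
  next
    case (insert p F)
    obtain a b where p: "p = (a,b)" by (cases p)
    have ab: "1 \<le> a" "a < b" "b \<le> \<alpha>" using insert.hyps(2) p by (auto simp: pairs_def)
    have sh: "- shift_exp (insert p F) (Suc k)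
        = - shift_exp F (Suc k) + of_bool (Suc k = a) + (- of_bool (Suc k = b))" for k
      using card_in_pairs_insert[OF insert.hyps(1) insert.hyps(3)[unfolded p], of "Suc k"]
        card_out_pairs_insert[OF insert.hyps(1) insert.hyps(3)[unfolded p], of "Suc k"]
      unfolding shift_exp_def p by simp
    have "(\<Prod>k<\<alpha>. y k powi (- shift_exp (insert p F) (Suc k)))
        = (\<Prod>k<\<alpha>. y k powi (- shift_exp F (Suc k))
            * (if Suc k = a then y k else 1) * (if Suc k = b then inverse (y k) else 1))"
    proof (rule prod.cong[OF refl])
      fix k assume k: "k \<in> {..<\<alpha>}"
      then have yk: "y k \<noteq> 0" using y by auto
      show "y k powi (- shift_exp (insert p F) (Suc k)) = y k powi (- shift_exp F (Suc k))
          * (if Suc k = a then y k else 1) * (if Suc k = b then inverse (y k) else 1)"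
        unfolding sh power_int_add[OF disjI1[OF yk]]
        by (cases "Suc k = a"; cases "Suc k = b") (simp_all add: power_int_minus)
    qed
    also have "\<dots> = (\<Prod>k<\<alpha>. y k powi (- shift_exp F (Suc k))) * y (a - 1) * inverse (y (b - 1))"
      using ab by (simp add: prod.distrib prod_lessThan_delta_Suc[of a \<alpha>]
          prod_lessThan_delta_Suc[of b \<alpha>])
    also have "\<dots> = (\<Prod>p\<in>insert p F. y (fst p - 1) / y (snd p - 1))"
      using insert.IH insert.hyps(1,3) p by (simp add: divide_inverse mult_ac)
    finally show ?case .
  qed
qed

lemma prod_power_int_add:
  fixes y :: "nat \<Rightarrow> 'a::field"
  assumes "\<forall>k<n. y k \<noteq> 0"
  shows "(\<Prod>k<n. y k powi (f k + g k)) = (\<Prod>k<n. y k powi f k) * (\<Prod>k<n. y k powi g k)"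
  unfolding prod.distrib[symmetric] using assms by (intro prod.cong refl) (simp add: power_int_add)

lemma sum_subsets_pairs_monomial:
  fixes y :: "nat \<Rightarrow> 'a::field"
  assumes y: "\<forall>k<\<alpha>. y k \<noteq> 0"
  shows "(\<Sum>S\<in>Pow (pairs \<alpha>). (- q) ^ card S * (\<Prod>k<\<alpha>. y k powi (a (Suc k) - shift_exp S (Suc k))))
     = (\<Prod>k<\<alpha>. y k powi a (Suc k)) * (\<Prod>p\<in>pairs \<alpha>. (- q) * (y (fst p - 1) / y (snd p - 1)) + 1)"
proof -
  have e1: "(- q) ^ card S * (\<Prod>k<\<alpha>. y k powi (a (Suc k) - shift_exp S (Suc k)))
      = (\<Prod>k<\<alpha>. y k powi a (Suc k)) * (\<Prod>p\<in>S. (- q) * (y (fst p - 1) / y (snd p - 1)))"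
    if S: "S \<in> Pow (pairs \<alpha>)" for S
  proof -
    have "(\<Prod>k<\<alpha>. y k powi (a (Suc k) - shift_exp S (Suc k)))
        = (\<Prod>k<\<alpha>. y k powi a (Suc k)) * (\<Prod>k<\<alpha>. y k powi (- shift_exp S (Suc k)))"
      using prod_power_int_add[OF y, of "\<lambda>k. a (Suc k)" "\<lambda>k. - shift_exp S (Suc k)"] by simp
    also have "\<dots> = (\<Prod>k<\<alpha>. y k powi a (Suc k)) * (\<Prod>p\<in>S. y (fst p - 1) / y (snd p - 1))"
      using prod_powi_minus_shift_exp[of S \<alpha> y] S y by simp
    moreover have "(\<Prod>p\<in>S. (- q) * (y (fst p - 1) / y (snd p - 1)))
        = (- q) ^ card S * (\<Prod>p\<in>S. y (fst p - 1) / y (snd p - 1))"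
      by (simp only: prod.distrib prod_constant)
    ultimately show ?thesis by (simp only: mult_ac)
  qed
  have "(\<Sum>S\<in>Pow (pairs \<alpha>). (- q) ^ card S * (\<Prod>k<\<alpha>. y k powi (a (Suc k) - shift_exp S (Suc k))))
      = (\<Prod>k<\<alpha>. y k powi a (Suc k))
        * (\<Sum>S\<in>Pow (pairs \<alpha>). \<Prod>p\<in>S. (- q) * (y (fst p - 1) / y (snd p - 1)))"
    unfolding sum_distrib_left by (rule sum.cong[OF refl]) (rule e1)
  also have "(\<Sum>S\<in>Pow (pairs \<alpha>). \<Prod>p\<in>S. (- q) * (y (fst p - 1) / y (snd p - 1)))
      = (\<Prod>p\<in>pairs \<alpha>. (- q) * (y (fst p - 1) / y (snd p - 1)) + 1)"
    by (subst prod_add[OF finite_pairs]) simp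
  finally show ?thesis .
qed

lemma prod_pairs:
  "(\<Prod>p\<in>pairs \<alpha>. g (fst p - 1) (snd p - 1)) = (\<Prod>l<\<alpha>. \<Prod>k<l. g k l)"
proof -
  have img: "pairs \<alpha> = (\<lambda>(l,k). (Suc k, Suc l)) ` (SIGMA l:{..<\<alpha>}. {..<l})"
  proof (rule Set.set_eqI)
    fix p show "p \<in> pairs \<alpha> \<longleftrightarrow> p \<in> (\<lambda>(l,k). (Suc k, Suc l)) ` (SIGMA l:{..<\<alpha>}. {..<l})"
    proof
      assume "p \<in> pairs \<alpha>"
      then obtain i j where p: "p = (i,j)" "1 \<le> i" "i < j" "j \<le> \<alpha>" by (auto simp: pairs_def)
      then have "(j - 1, i - 1) \<in> (SIGMA l:{..<\<alpha>}. {..<l})" by auto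
      moreover have "p = (\<lambda>(l,k). (Suc k, Suc l)) (j - 1, i - 1)" using p by auto
      ultimately show "p \<in> (\<lambda>(l,k). (Suc k, Suc l)) ` (SIGMA l:{..<\<alpha>}. {..<l})" by blast
    next
      assume "p \<in> (\<lambda>(l,k). (Suc k, Suc l)) ` (SIGMA l:{..<\<alpha>}. {..<l})"
      then show "p \<in> pairs \<alpha>" by (auto simp: pairs_def)
    qed
  qed
  have inj: "inj_on (\<lambda>(l,k). (Suc k, Suc l)) (SIGMA l:{..<\<alpha>}. {..<l})" by (auto simp: inj_on_def)
  have "(\<Prod>p\<in>pairs \<alpha>. g (fst p - 1) (snd p - 1)) = (\<Prod>(l,k)\<in>(SIGMA l:{..<\<alpha>}. {..<l}). g k l)"
    unfolding img by (subst prod.reindex[OF inj]) (auto intro!: prod.cong)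
  also have "\<dots> = (\<Prod>l<\<alpha>. \<Prod>k<l. g k l)" by (subst prod.Sigma) auto
  finally show ?thesis .
qed

lemma finite_ASM: "finite (ASM \<alpha>)"
proof -
  have "ASM \<alpha> \<subseteq> asm_of_triangle \<alpha> ` monotone_triangles \<alpha> (staircase \<alpha>)"
  proof
    fix A assume A: "A \<in> ASM \<alpha>"
    then have "A = asm_of_triangle \<alpha> (triangle_of_asm \<alpha> A)" by (simp add: asm_of_triangle_of_asm)
    then show "A \<in> asm_of_triangle \<alpha> ` monotone_triangles \<alpha> (staircase \<alpha>)"
      using triangle_of_asm_in_monotone_triangles[OF A] by blast
  qed
  then show ?thesis by (rule finite_subset) (simp add: finite_monotone_triangles)
qed

lemma sum_ASM_monomial:
  fixes y :: "nat \<Rightarrow> 'a::field"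
  assumes y: "\<forall>k<\<alpha>. y k \<noteq> 0"
  shows "(\<Sum>A\<in>ASM \<alpha>. (- q) powi (inv_num \<alpha> A - int (neg_num \<alpha> A)) * (1 - q) ^ neg_num \<alpha> A *
           (\<Prod>k<\<alpha>. y k powi (a (Suc k) + int \<alpha> - int (Suc k) - mvec \<alpha> A (Suc k))))
     = (\<Prod>k<\<alpha>. y k powi a (Suc k)) * (\<Prod>k<\<alpha>. y k powi (- int k)) * q_vandermonde q y \<alpha>"
proof -
  have e: "(\<Prod>k<\<alpha>. y k powi (a (Suc k) + int \<alpha> - int (Suc k) - mvec \<alpha> A (Suc k)))
      = (\<Prod>k<\<alpha>. y k powi a (Suc k)) * (\<Prod>k<\<alpha>. y k powi (- int k))
        * (\<Prod>k<\<alpha>. y k powi (int \<alpha> - 1 - mvec \<alpha> A (Suc k)))" for A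
  proof -
    have "a (Suc k) + int \<alpha> - int (Suc k) - mvec \<alpha> A (Suc k)
        = a (Suc k) + (- int k + (int \<alpha> - 1 - mvec \<alpha> A (Suc k)))" for k
      by simp
    then show ?thesis by (simp only: prod_power_int_add[OF y] mult.assoc)
  qed
  have "(\<Sum>A\<in>ASM \<alpha>. (- q) powi (inv_num \<alpha> A - int (neg_num \<alpha> A)) * (1 - q) ^ neg_num \<alpha> A *
           (\<Prod>k<\<alpha>. y k powi (a (Suc k) + int \<alpha> - int (Suc k) - mvec \<alpha> A (Suc k))))
      = (\<Prod>k<\<alpha>. y k powi a (Suc k)) * (\<Prod>k<\<alpha>. y k powi (- int k)) * (\<Sum>A\<in>ASM \<alpha>. asm_weight q y \<alpha> A)"
    unfolding e asm_weight_def sum_distrib_left by (intro sum.cong refl) (simp add: algebra_simps)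
  also have "\<dots> = (\<Prod>k<\<alpha>. y k powi a (Suc k)) * (\<Prod>k<\<alpha>. y k powi (- int k)) * q_vandermonde q y \<alpha>"
    by (simp add: sum_asm_weight_eq_q_vandermonde)
  finally show ?thesis .
qed

lemma prod_pairs_eq_q_vandermonde:
  fixes y :: "nat \<Rightarrow> 'a::field"
  assumes y: "\<forall>k<\<alpha>. y k \<noteq> 0"
  shows "(\<Prod>p\<in>pairs \<alpha>. (- q) * (y (fst p - 1) / y (snd p - 1)) + 1)
      = (\<Prod>k<\<alpha>. y k powi (- int k)) * q_vandermonde q y \<alpha>"
proof -
  have "(\<Prod>p\<in>pairs \<alpha>. (- q) * (y (fst p - 1) / y (snd p - 1)) + 1)
      = (\<Prod>l<\<alpha>. \<Prod>k<l. (- q) * (y k / y l) + 1)"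
    by (rule prod_pairs)
  also have "\<dots> = (\<Prod>l<\<alpha>. (\<Prod>k<l. y l - q * y k) * inverse (y l) ^ l)"
  proof (rule prod.cong[OF refl])
    fix l assume "l \<in> {..<\<alpha>}" then have yl: "y l \<noteq> 0" using y by auto
    have "(\<Prod>k<l. (- q) * (y k / y l) + 1) = (\<Prod>k<l. (y l - q * y k) * inverse (y l))"
      using yl by (intro prod.cong refl) (simp add: field_simps)
    also have "\<dots> = (\<Prod>k<l. y l - q * y k) * inverse (y l) ^ l" by (simp add: prod.distrib)
    finally show "(\<Prod>k<l. (- q) * (y k / y l) + 1) = (\<Prod>k<l. y l - q * y k) * inverse (y l) ^ l" .
  qed
  also have "\<dots> = (\<Prod>k<\<alpha>. y k powi (- int k)) * q_vandermonde q y \<alpha>"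
    by (simp add: q_vandermonde_def prod.distrib power_int_minus power_inverse mult.commute)
  finally show ?thesis .
qed

lemma Mcoef_laurent_identity:
  fixes q :: "'a::field" and y :: "nat \<Rightarrow> 'a"
  assumes "\<forall>k<\<alpha>. y k \<noteq> 0"
  shows "(\<Sum>S\<in>Pow (pairs \<alpha>). (- q) ^ card S *
      laurent_monomial y (map (\<lambda>k. a k - shift_exp S k) [1..<\<alpha>+1]))
    = (\<Sum>A\<in>ASM \<alpha>. (- q) powi (inv_num \<alpha> A - int (neg_num \<alpha> A)) * (1 - q) ^ neg_num \<alpha> A *
      laurent_monomial y (map (\<lambda>i. a i + int \<alpha> - int i - mvec \<alpha> A i) [1..<\<alpha>+1]))"
  unfolding laurent_monomial_map_upt sum_subsets_pairs_monomial[OF assms]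
    sum_ASM_monomial[OF assms] prod_pairs_eq_q_vandermonde[OF assms]
  by (simp only: mult.assoc)

text \<open>The identity is formal in \<open>x\<close>: only \<open>q \<noteq> 0\<close> and \<open>x\<^sub>i \<noteq> 0\<close> are used, not \<open>\<alpha> \<ge> 1\<close> nor the
  genericity of the \<open>x\<^sub>i\<close>.\<close>

theorem theorem4p6:
  fixes q :: "'a::field" and r \<alpha> :: nat and a :: "nat \<Rightarrow> int"
    and f :: "(nat \<Rightarrow> 'a) \<Rightarrow> 'a" and x :: "nat \<Rightarrow> 'a"
  assumes "\<alpha> \<ge> 1"
    and "q \<noteq> 0"
    and "\<forall>i\<in>{1..r+1}. x i \<noteq> 0"
    and "\<forall>i\<in>{1..r+1}. \<forall>j\<in>{1..r+1}. i \<noteq> j \<longrightarrow> (\<forall>k::int. x i \<noteq> q powi k * x j)"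
  shows "Mcoef q (r+1) \<alpha> a f x =
    (\<Sum>A\<in>ASM \<alpha>. (- q) powi (inv_num \<alpha> A - int (neg_num \<alpha> A)) * (1 - q) ^ neg_num \<alpha> A *
        opprod (map (\<lambda>i. Mop q (r+1) (a i + int \<alpha> - int i - mvec \<alpha> A i)) [1..<\<alpha>+1]) f x)"
proof -
  have map_Mop: "map (\<lambda>k. Mop q (r+1) (a k - shift_exp S k)) [1..<\<alpha>+1]
      = map (Mop q (r+1)) (map (\<lambda>k. a k - shift_exp S k) [1..<\<alpha>+1])" for S
    by simp
  have map_Mop': "map (\<lambda>i. Mop q (r+1) (a i + int \<alpha> - int i - mvec \<alpha> A i)) [1..<\<alpha>+1]
      = map (Mop q (r+1)) (map (\<lambda>i. a i + int \<alpha> - int i - mvec \<alpha> A i) [1..<\<alpha>+1])"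
    for A by simp
  show ?thesis
    unfolding Mcoef_def map_Mop map_Mop'
    by (rule sum_opprod_Mop_eq_if_laurent_eq[where L = \<alpha>])
      (use finite_pairs finite_ASM assms(2,3) Mcoef_laurent_identity in \<open>auto simp del: upt_Suc\<close>)
qed

end
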